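(* Let $b,c,d\in\mathbb{F}_q[T]$ be distinct polynomials with $\deg_T b,\deg_T c,\deg_T d\ge1$. Let $n,m,\ell\ge1$ be integers and $a_1,\dots,a_{n-1}\in\mathbb{F}_q[T]$ with $\deg_T a_i\ge1$ for all $1\le i\le n-1$. Put \[ \alpha_1:=[0,a_1,\dots,a_{n-1},c,\overline{b}],\quad \alpha_2:=[0,a_1,\dots,a_{n-1},c,\overline{b^{[m]},d}], \] \[ \alpha_3:=[0,a_1,\dots,a_{n-1},c,\overline{b^{[m]},c,b^{[\ell]}}],\quad \alpha_4:=[0,a_1,\dots,a_{n-1},c,\overline{(b,d)^{[m]},c,(b,d)^{[\ell]}}], \] and let $(p_{i,k}/q_{i,k})_{k\ge0}$ be the convergent sequence of $\alpha_i$ for $i=1,2,3,4$. Then \[ H(\alpha_1)\asymp_{b,c}|q_{1,n}|^2,\quad H(\alpha_2)\asymp_{b,c,d}|q_{2,n}q_{2,n+m+1}|, \] \[ H(\alpha_3)\asymp_{b,c}|q_{3,n}q_{3,n+m+\ell+1}|,\quad H(\alpha_4)\asymp_{b,c,d}|q_{4,n}q_{4,n+2m+2\ell+1}|. \]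
   Context: $\mathbb{F}_q((T^{-1}))$ carries the absolute value $|\xi|=q^{-N}$ for $\xi=\sum_{j\ge N}a_jT^{-j}$ with $a_N\ne0$, $|0|=0$. For a continued fraction $[a_0,a_1,\dots]$ ($a_i\in\mathbb{F}_q[T]$, $\deg_T a_j\ge1$ for $j\ge1$), the convergents $p_k/q_k$ are defined by $p_{-1}=1,p_0=a_0,p_k=a_kp_{k-1}+p_{k-2}$ and $q_{-1}=0,q_0=1,q_k=a_kq_{k-1}+q_{k-2}$. $W^{[n]}$ is the word $W$ repeated $n$ times, and $\overline{W}$ is the infinite periodic repetition of $W$. The height $H(\alpha)$ of an algebraic $\alpha$ is the maximum absolute value of the coefficients of its minimal polynomial (the unique non-constant irreducible primitive polynomial in $(\mathbb{F}_q[T])[X]$ with leading coefficient monic in $T$ vanishing at $\alpha$). $A\asymp_{x}B$ means $|A|\le C|B|$ and $|B|\le C|A|$ for a constant $C>0$ depending at most on $x$ (in particular independent of $n,m,\ell,a_1,\dots,a_{n-1}$). *)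

theory Defs
  imports "HOL-Computational_Algebra.Computational_Algebra"
begin

text \<open>F_q((T^{-1})) is modelled as the Laurent series field 'a fls in the variable X = T^{-1}.
  A polynomial in T is embedded by sending T to X^{-1}.\<close>

definition poly_to_fls :: "'a::field poly \<Rightarrow> 'a fls" where
  "poly_to_fls p = (\<Sum>i\<le>degree p. fls_const (coeff p i) * fls_X_inv ^ i)"

definition fabs :: "'a::{field,finite} fls \<Rightarrow> real" where
  "fabs x = (if x = 0 then 0 else real (card (UNIV :: 'a set)) powr (- real_of_int (fls_subdegree x)))"

text \<open>Continuant recursion with index shift: cf_P A (k+1) = p_k, cf_P A 0 = p_{-1}.\<close>
fun cf_P :: "(nat \<Rightarrow> 'a::comm_ring_1) \<Rightarrow> nat \<Rightarrow> 'a" where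
  "cf_P A 0 = 1"
| "cf_P A (Suc 0) = A 0"
| "cf_P A (Suc (Suc k)) = A (Suc k) * cf_P A (Suc k) + cf_P A k"

fun cf_Q :: "(nat \<Rightarrow> 'a::comm_ring_1) \<Rightarrow> nat \<Rightarrow> 'a" where
  "cf_Q A 0 = 0"
| "cf_Q A (Suc 0) = 1"
| "cf_Q A (Suc (Suc k)) = A (Suc k) * cf_Q A (Suc k) + cf_Q A k"

definition cf_num :: "(nat \<Rightarrow> 'a::comm_ring_1) \<Rightarrow> nat \<Rightarrow> 'a" where
  "cf_num A k = cf_P A (Suc k)"

definition cf_den :: "(nat \<Rightarrow> 'a::comm_ring_1) \<Rightarrow> nat \<Rightarrow> 'a" where
  "cf_den A k = cf_Q A (Suc k)"

definition cf_value :: "(nat \<Rightarrow> 'a::{field,finite} poly) \<Rightarrow> 'a fls" where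
  "cf_value A = (THE xi. \<forall>e>0. \<exists>K. \<forall>k\<ge>K.
      fabs (xi - poly_to_fls (cf_num A k) / poly_to_fls (cf_den A k)) < e)"

definition cf_word :: "(nat \<Rightarrow> 'a) \<Rightarrow> nat \<Rightarrow> 'a \<Rightarrow> 'a list \<Rightarrow> nat \<Rightarrow> 'a::zero" where
  "cf_word a n c W k = (if k = 0 then 0 else if k < n then a k else if k = n then c
      else W ! ((k - n - 1) mod length W))"

definition is_minpoly :: "'a::{field,finite} fls \<Rightarrow> 'a poly poly \<Rightarrow> bool" where
  "is_minpoly xi P \<longleftrightarrow> degree P \<ge> 1 \<and> irreducible P
     \<and> (\<forall>g. (\<forall>i. g dvd coeff P i) \<longrightarrow> is_unit g)
     \<and> lead_coeff (lead_coeff P) = 1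
     \<and> poly (map_poly poly_to_fls P) xi = 0"

definition height :: "'a::{field,finite} fls \<Rightarrow> real" where
  "height xi = (THE h. \<exists>P. is_minpoly xi P \<and>
      h = Max ((\<lambda>i. fabs (poly_to_fls (coeff P i))) ` {..degree P}))"

end

(*
  The tail of each alpha_i after the partial quotient c is purely periodic with period W.
  If gamma is its value and M = [[P1, P0], [Q1, Q0]] the product of the matrices
  [[w, 1], [1, 0]] over one period, then gamma is a root of the binary quadratic form
  F = Q1 X^2 + (Q0 - P1) X Y - P0 Y^2, and alpha = (p_n gamma + p_(n-1)) / (q_n gamma + q_(n-1))
  is a root of F transformed by the unimodular matrix of the first n + 1 partial quotients.
  The height of alpha is the largest absolute value of a coefficient of this form divided by
  its content g. All coefficients have degree at most deg (q_n q_(n+|W|)), while the leading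
  one has degree at least deg (q_n q_(n+|W|)) - deg c - deg (last W). Since the substitution is
  unimodular, g also divides the coefficients of F, i.e. M is congruent to a scalar matrix
  modulo g; for the four periods this forces g to divide 1, b - d, b - c and b - d respectively,
  which bounds the loss in the lower estimate by a constant.
*)
theory Submission
  imports Defs "HOL-Library.Cardinality"
begin

unbundle fps_syntax

section \<open>Polynomials in \<open>T\<close> as Laurent series in \<open>T\<^sup>-\<^sup>1\<close>\<close>

lemma fls_nth_poly_to_fls: "poly_to_fls p $$ j = (if j \<le> 0 then coeff p (nat (- j)) else 0)"
proof -
  have "poly_to_fls p $$ j = (\<Sum>i\<le>degree p. if j = - int i then coeff p i else 0)"
    unfolding poly_to_fls_def fls_nth_sum by (intro sum.cong) auto
  also have "\<dots> = (if j \<le> 0 then coeff p (nat (- j)) else 0)"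
  proof (cases "j \<le> 0 \<and> nat (- j) \<le> degree p")
    case True
    then have "(\<Sum>i\<le>degree p. if j = - int i then coeff p i else 0) = (\<Sum>i\<in>{nat (- j)}. coeff p i)"
      by (intro sum.mono_neutral_cong_right) auto
    then show ?thesis using True by auto
  next
    case False
    then show ?thesis by (auto simp: coeff_eq_0 intro!: sum.neutral)
  qed
  finally show ?thesis .
qed

lemma poly_to_fls_0 [simp]: "poly_to_fls 0 = 0"
  and poly_to_fls_add: "poly_to_fls (p + q) = poly_to_fls p + poly_to_fls q"
  and poly_to_fls_diff: "poly_to_fls (p - q) = poly_to_fls p - poly_to_fls q"
  and poly_to_fls_uminus: "poly_to_fls (- p) = - poly_to_fls p"
  and poly_to_fls_smult: "poly_to_fls (smult c p) = fls_const c * poly_to_fls p"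
  and poly_to_fls_const: "poly_to_fls [:c:] = fls_const c"
  by (auto intro!: fls_eqI simp: fls_nth_poly_to_fls coeff_pCons split: nat.split)

lemma poly_to_fls_1 [simp]: "poly_to_fls 1 = 1"
  using poly_to_fls_const[of 1] by (simp add: one_pCons)

lemma poly_to_fls_pCons: "poly_to_fls (pCons a p) = fls_const a + fls_X_inv * poly_to_fls p"
proof (rule fls_eqI)
  fix j
  have "(fls_X_inv * poly_to_fls p) $$ j = poly_to_fls p $$ (j + 1)"
    by (simp add: fls_X_inv_times_conv_shift)
  then show "poly_to_fls (pCons a p) $$ j = (fls_const a + fls_X_inv * poly_to_fls p) $$ j"
    by (auto simp: fls_nth_poly_to_fls coeff_pCons nat_diff_distrib' Suc_nat_eq_nat_zadd1
        split: nat.split)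
qed

lemma poly_to_fls_mult: "poly_to_fls (p * q) = poly_to_fls p * poly_to_fls q"
  by (induction p) (simp_all add: poly_to_fls_add poly_to_fls_smult poly_to_fls_pCons algebra_simps)

lemma poly_to_fls_of_nat: "poly_to_fls (of_nat k) = of_nat k"
  by (induction k) (simp_all add: poly_to_fls_add)

lemma poly_to_fls_numeral [simp]: "poly_to_fls (numeral k) = numeral k"
  using poly_to_fls_of_nat[of "numeral k"] by simp

lemma poly_to_fls_eq_0_iff [simp]: "poly_to_fls p = 0 \<longleftrightarrow> p = 0"
proof
  assume "poly_to_fls p = 0"
  then have "coeff p i = 0" for i
    using fls_nth_poly_to_fls[of p "- int i"] by simp
  then show "p = 0" by (simp add: poly_eq_iff)
qed simp

lemma fls_subdegree_poly_to_fls: "fls_subdegree (poly_to_fls p) = - int (degree p)"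
proof (cases "p = 0")
  case False
  show ?thesis
    by (rule fls_subdegree_eqI) (use False in \<open>auto simp: fls_nth_poly_to_fls coeff_eq_0\<close>)
qed simp

lemma card_field_ge_2: "2 \<le> CARD('a::{field,finite})"
  using card_mono[of "UNIV :: 'a set" "{0, 1}"] by simp

lemma fabs_nonneg: "0 \<le> fabs x"
  by (simp add: fabs_def)

lemma fabs_poly_to_fls:
  "fabs (poly_to_fls (p :: 'a::{field,finite} poly))
    = (if p = 0 then 0 else real CARD('a) ^ degree p)"
  using card_field_ge_2[where 'a = 'a]
  by (simp add: fabs_def fls_subdegree_poly_to_fls powr_realpow)

section \<open>Convergence of Laurent series\<close>

definition vanishes_below :: "int \<Rightarrow> 'a::zero fls \<Rightarrow> bool" where
  "vanishes_below N x \<longleftrightarrow> (\<forall>j<N. x $$ j = 0)"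

lemma vanishes_below_0 [simp]: "vanishes_below N 0"
  and vanishes_below_subdegree: "vanishes_below (fls_subdegree x) x"
  and vanishes_below_mono: "vanishes_below N x \<Longrightarrow> M \<le> N \<Longrightarrow> vanishes_below M x"
  and vanishes_below_add:
    "vanishes_below N x \<Longrightarrow> vanishes_below N y \<Longrightarrow> vanishes_below N (x + y)"
  and vanishes_below_diff:
    "vanishes_below N u \<Longrightarrow> vanishes_below N v \<Longrightarrow> vanishes_below N (u - v)"
  and vanishes_below_uminus: "vanishes_below N u \<Longrightarrow> vanishes_below N (- u)"
  for x y :: "'a::comm_monoid_add fls" and u v :: "'b::ab_group_add fls"
  by (auto simp: vanishes_below_def)

lemma vanishes_below_iff: "vanishes_below N x \<longleftrightarrow> x = 0 \<or> N \<le> fls_subdegree x"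
  by (auto simp: vanishes_below_def intro: fls_subdegree_geI)

lemma vanishes_below_mult:
  fixes x y :: "'a::idom fls"
  assumes "vanishes_below N x" "vanishes_below M y"
  shows "vanishes_below (N + M) (x * y)"
  using assms by (cases "x = 0 \<or> y = 0") (auto simp: vanishes_below_iff)

lemma vanishes_below_all_imp_0: "(\<And>N. vanishes_below N x) \<Longrightarrow> x = 0"
  by (metis vanishes_below_iff less_add_one not_less)

lemma vanishes_below_inverse: "vanishes_below (- fls_subdegree x) (inverse (x :: 'a::field fls))"
  using vanishes_below_subdegree[of "inverse x"] by simp

lemma vanishes_below_poly_to_fls: "vanishes_below (- int (degree p)) (poly_to_fls p)"
  using vanishes_below_subdegree[of "poly_to_fls p"] by (simp add: fls_subdegree_poly_to_fls)

lemma vanishes_below_1_poly_to_fls: "vanishes_below 1 (poly_to_fls p) \<longleftrightarrow> p = 0"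
  by (cases "p = 0") (simp_all add: vanishes_below_iff fls_subdegree_poly_to_fls)

definition fls_tendsto :: "(nat \<Rightarrow> 'a::ab_group_add fls) \<Rightarrow> 'a fls \<Rightarrow> bool" where
  "fls_tendsto s x \<longleftrightarrow> (\<forall>N. \<forall>\<^sub>F k in sequentially. vanishes_below N (x - s k))"

lemma fls_tendsto_unique:
  assumes "fls_tendsto s x" "fls_tendsto s y"
  shows "x = y"
proof -
  have "vanishes_below N (x - y)" for N
  proof -
    have "\<forall>\<^sub>F k in sequentially. vanishes_below N (x - s k) \<and> vanishes_below N (y - s k)"
      using assms unfolding fls_tendsto_def by (intro eventually_conj) blast+
    then obtain k where "vanishes_below N (x - s k)" "vanishes_below N (y - s k)"
      using eventually_happens'[OF sequentially_bot] by blast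
    then show ?thesis using vanishes_below_diff by fastforce
  qed
  then show ?thesis using vanishes_below_all_imp_0[of "x - y"] by simp
qed

lemma fls_tendsto_const: "fls_tendsto (\<lambda>k. x) x"
  by (simp add: fls_tendsto_def)

lemma fls_tendsto_add:
  assumes "fls_tendsto s x" "fls_tendsto t y"
  shows "fls_tendsto (\<lambda>k. s k + t k) (x + y)"
  unfolding fls_tendsto_def
proof
  fix N
  have "\<forall>\<^sub>F k in sequentially. vanishes_below N (x - s k) \<and> vanishes_below N (y - t k)"
    using assms unfolding fls_tendsto_def by (intro eventually_conj) blast+
  then show "\<forall>\<^sub>F k in sequentially. vanishes_below N (x + y - (s k + t k))"
    by eventually_elim (metis vanishes_below_add add_diff_add)
qed

lemma fls_tendsto_mult:
  fixes x y :: "'a::idom fls"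
  assumes "fls_tendsto s x" "fls_tendsto t y"
  shows "fls_tendsto (\<lambda>k. s k * t k) (x * y)"
  unfolding fls_tendsto_def
proof
  fix N
  define M where "M = max N 0 - min (min (fls_subdegree x) (fls_subdegree y)) 0"
  have "\<forall>\<^sub>F k in sequentially. vanishes_below M (x - s k) \<and> vanishes_below M (y - t k)"
    using assms unfolding fls_tendsto_def by (intro eventually_conj) blast+
  then show "\<forall>\<^sub>F k in sequentially. vanishes_below N (x * y - s k * t k)"
  proof eventually_elim
    case (elim k)
    then have xs: "vanishes_below M (x - s k)" and yt: "vanishes_below M (y - t k)" by auto
    have "x * y - s k * t k = x * (y - t k) + (x - s k) * y - (x - s k) * (y - t k)"
      by (simp add: algebra_simps)
    moreover have "vanishes_below N (x * (y - t k))"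
      using vanishes_below_mult[OF vanishes_below_subdegree yt]
      by (rule vanishes_below_mono) (simp add: M_def)
    moreover have "vanishes_below N ((x - s k) * y)"
      using vanishes_below_mult[OF xs vanishes_below_subdegree]
      by (rule vanishes_below_mono) (simp add: M_def)
    moreover have "vanishes_below N ((x - s k) * (y - t k))"
      using vanishes_below_mult[OF xs yt]
      by (rule vanishes_below_mono) (simp add: M_def)
    ultimately show ?case by (simp only:) (intro vanishes_below_add vanishes_below_diff)
  qed
qed

lemma fls_tendsto_offset: "fls_tendsto s x \<Longrightarrow> fls_tendsto (\<lambda>k. s (k + j)) x"
  unfolding fls_tendsto_def eventually_sequentially by (meson le_add1 order_trans)

lemma fls_tendsto_iff_fabs:
  "fls_tendsto s x \<longleftrightarrow> (\<forall>e>0. \<exists>K. \<forall>k\<ge>K. fabs (x - s k) < e)"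
  for x :: "'a::{field,finite} fls"
proof -
  define Q where "Q = real CARD('a)"
  have Q: "2 \<le> Q" using card_field_ge_2[where 'a = 'a] by (simp add: Q_def)
  have fabs_less: "fabs z < Q powr (- real_of_int N) \<longleftrightarrow> vanishes_below (N + 1) z"
    for z :: "'a fls" and N
    using Q by (auto simp: fabs_def Q_def vanishes_below_iff)
  have small: "\<exists>N. Q powr (- real_of_int N) < e" if "e > 0" for e
  proof -
    obtain n :: nat where "1 / e < Q ^ n" using real_arch_pow[of Q "1 / e"] Q by auto
    then have "Q powr (- real_of_int (int n)) < e"
      using that Q by (simp add: powr_minus powr_realpow field_simps)
    then show ?thesis by blast
  qed
  show ?thesis
  proof
    assume lim: "fls_tendsto s x"
    show "\<forall>e>0. \<exists>K. \<forall>k\<ge>K. fabs (x - s k) < e"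
    proof (intro allI impI)
      fix e :: real assume "e > 0"
      then obtain N where N: "Q powr (- real_of_int N) < e" using small by blast
      have "\<forall>\<^sub>F k in sequentially. vanishes_below (N + 1) (x - s k)"
        using lim by (simp add: fls_tendsto_def)
      then show "\<exists>K. \<forall>k\<ge>K. fabs (x - s k) < e"
        unfolding eventually_sequentially using N fabs_less by (meson less_trans)
    qed
  next
    assume "\<forall>e>0. \<exists>K. \<forall>k\<ge>K. fabs (x - s k) < e"
    then have "\<exists>K. \<forall>k\<ge>K. fabs (x - s k) < Q powr (- real_of_int (N - 1))" for N
      using Q by simp
    then show "fls_tendsto s x"
      unfolding fls_tendsto_def eventually_sequentially using fabs_less[of _ "_ - 1"] by simp
  qed
qed

section \<open>Continuants\<close>

text \<open>\<open>(a, b, c, d)\<close> is the matrix with rows \<open>(a, b)\<close> and \<open>(c, d)\<close>.\<close>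

type_synonym 'a mat2 = "'a \<times> 'a \<times> 'a \<times> 'a"

definition mat2_mult :: "'a::comm_ring_1 mat2 \<Rightarrow> 'a mat2 \<Rightarrow> 'a mat2" where
  "mat2_mult X Y = (case X of (a, b, c, d) \<Rightarrow> case Y of (e, f, g, h) \<Rightarrow>
     (a * e + b * g, a * f + b * h, c * e + d * g, c * f + d * h))"

definition mat2_det :: "'a::comm_ring_1 mat2 \<Rightarrow> 'a" where
  "mat2_det X = (case X of (a, b, c, d) \<Rightarrow> a * d - b * c)"

lemma mat2_mult_assoc: "mat2_mult (mat2_mult X Y) Z = mat2_mult X (mat2_mult Y Z)"
  by (cases X; cases Y; cases Z) (simp add: mat2_mult_def algebra_simps)

lemma mat2_mult_1_left [simp]: "mat2_mult (1, 0, 0, 1) X = X"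
  by (cases X) (simp add: mat2_mult_def)

lemma mat2_det_mult: "mat2_det (mat2_mult X Y) = mat2_det X * mat2_det Y"
  by (cases X; cases Y) (simp add: mat2_mult_def mat2_det_def algebra_simps)

fun cf_matrix :: "'a::comm_ring_1 list \<Rightarrow> 'a mat2" where
  "cf_matrix [] = (1, 0, 0, 1)"
| "cf_matrix (x # xs) = mat2_mult (x, 1, 1, 0) (cf_matrix xs)"

lemma cf_matrix_append: "cf_matrix (xs @ ys) = mat2_mult (cf_matrix xs) (cf_matrix ys)"
  by (induction xs) (simp_all add: mat2_mult_assoc)

lemma mat2_det_cf_matrix: "mat2_det (cf_matrix xs) = (-1) ^ length xs"
proof (induction xs)
  case (Cons x xs)
  have "mat2_det (x, 1, 1, 0) = -1" by (simp add: mat2_det_def)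
  with Cons show ?case by (simp add: mat2_det_mult)
qed (simp add: mat2_det_def)

lemma cf_matrix_upt:
  "cf_matrix (map A [0..<Suc k]) = (cf_P A (Suc k), cf_P A k, cf_Q A (Suc k), cf_Q A k)"
proof (induction k)
  case (Suc k)
  have "cf_matrix (map A [0..<Suc (Suc k)])
      = mat2_mult (cf_matrix (map A [0..<Suc k])) (cf_matrix [A (Suc k)])"
    by (simp flip: cf_matrix_append del: upt_Suc cf_matrix.simps(2)) simp
  then show ?case
    using Suc by (simp add: mat2_mult_def algebra_simps del: upt_Suc)
qed (simp add: mat2_mult_def)

lemma cf_det: "cf_P A (Suc k) * cf_Q A k - cf_P A k * cf_Q A (Suc k) = (-1) ^ Suc k"
  using mat2_det_cf_matrix[of "map A [0..<Suc k]"] unfolding cf_matrix_upt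
  by (simp add: mat2_det_def)

lemma cf_shift:
  fixes A :: "nat \<Rightarrow> 'a::comm_ring_1" and s k :: nat
  defines "B \<equiv> \<lambda>i. A (Suc s + i)"
  shows "cf_P A (Suc s + Suc k) = cf_P A (Suc s) * cf_P B (Suc k) + cf_P A s * cf_Q B (Suc k)"
    and "cf_Q A (Suc s + Suc k) = cf_Q A (Suc s) * cf_P B (Suc k) + cf_Q A s * cf_Q B (Suc k)"
proof -
  have "map A [0..<Suc (Suc s + k)] = map A [0..<Suc s] @ map B [0..<Suc k]"
    by (rule nth_equalityI) (auto simp: nth_append B_def simp del: upt_Suc)
  then have "(cf_P A (Suc (Suc s + k)), cf_P A (Suc s + k),
      cf_Q A (Suc (Suc s + k)), cf_Q A (Suc s + k))
      = mat2_mult (cf_P A (Suc s), cf_P A s, cf_Q A (Suc s), cf_Q A s)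
          (cf_P B (Suc k), cf_P B k, cf_Q B (Suc k), cf_Q B k)"
    by (metis cf_matrix_append cf_matrix_upt)
  then show "cf_P A (Suc s + Suc k) = cf_P A (Suc s) * cf_P B (Suc k) + cf_P A s * cf_Q B (Suc k)"
    and "cf_Q A (Suc s + Suc k) = cf_Q A (Suc s) * cf_P B (Suc k) + cf_Q A s * cf_Q B (Suc k)"
    by (simp_all add: mat2_mult_def del: cf_P.simps cf_Q.simps)
qed

definition cf_admissible :: "(nat \<Rightarrow> 'a::zero poly) \<Rightarrow> bool" where
  "cf_admissible A \<longleftrightarrow> (\<forall>i\<ge>1. 1 \<le> degree (A i))"

lemma cf_Q_Suc_eq_cf_P_tail: "cf_Q A (Suc k) = cf_P (\<lambda>i. A (Suc i)) k"
  by (induction A k rule: cf_P.induct) simp_all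

lemma cf_P_Suc_eq_cf_Q_tail: "A 0 = 0 \<Longrightarrow> cf_P A (Suc k) = cf_Q (\<lambda>i. A (Suc i)) k"
  by (induction A k rule: cf_P.induct) simp_all

lemma cf_P_nonzero_degree:
  fixes A :: "nat \<Rightarrow> 'a::idom poly"
  assumes "\<forall>i. 1 \<le> degree (A i)"
  shows "cf_P A k \<noteq> 0 \<and> degree (cf_P A k) = (\<Sum>i<k. degree (A i))"
  using assms
proof (induction A k rule: cf_P.induct)
  case (2 A)
  then have "A 0 \<noteq> 0" by (metis degree_0 not_one_le_zero)
  then show ?case by simp
next
  case (3 A k)
  let ?x = "A (Suc k) * cf_P A (Suc k)"
  have "A (Suc k) \<noteq> 0" using 3 by (metis degree_0 not_one_le_zero)
  then have dx: "degree ?x = degree (A (Suc k)) + degree (cf_P A (Suc k))"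
    using 3 by (simp add: degree_mult_eq)
  have "1 \<le> degree (A k)" using 3 by blast
  moreover have "degree (cf_P A (Suc k)) = degree (cf_P A k) + degree (A k)" using 3 by simp
  ultimately have lt: "degree (cf_P A k) < degree ?x" using dx by linarith
  then have d: "degree (cf_P A (Suc (Suc k))) = degree ?x" by (simp add: degree_add_eq_left)
  with lt have "cf_P A (Suc (Suc k)) \<noteq> 0" by (metis degree_0 not_less0)
  with d dx show ?case using 3 by simp
qed simp

lemma cf_Q_nonzero_degree:
  fixes A :: "nat \<Rightarrow> 'a::idom poly"
  assumes "cf_admissible A"
  shows "cf_Q A (Suc k) \<noteq> 0 \<and> degree (cf_Q A (Suc k)) = (\<Sum>i<k. degree (A (Suc i)))"
  using cf_P_nonzero_degree[of "\<lambda>i. A (Suc i)" k] assms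
  by (simp add: cf_Q_Suc_eq_cf_P_tail cf_admissible_def)

lemma degree_cf_Q_less_Suc:
  fixes A :: "nat \<Rightarrow> 'a::idom poly"
  assumes "cf_admissible A"
  shows "cf_Q A k = 0 \<or> degree (cf_Q A k) < degree (cf_Q A (Suc k))"
proof (cases k)
  case (Suc j)
  have "1 \<le> degree (A (Suc j))" using assms by (simp add: cf_admissible_def)
  then show ?thesis
    using Suc cf_Q_nonzero_degree[OF assms, of j] cf_Q_nonzero_degree[OF assms, of "Suc j"]
    by (simp del: cf_Q.simps)
qed simp

lemma degree_cf_Q_mono:
  fixes A :: "nat \<Rightarrow> 'a::idom poly"
  assumes "cf_admissible A" "k \<le> j"
  shows "degree (cf_Q A k) \<le> degree (cf_Q A j)"
proof -
  have "degree (cf_Q A i) \<le> degree (cf_Q A (Suc i))" for i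
    using degree_cf_Q_less_Suc[OF assms(1), of i] by auto
  then show ?thesis using lift_Suc_mono_le[of "\<lambda>i. degree (cf_Q A i)"] assms(2) by blast
qed

lemma degree_cf_Q_ge:
  fixes A :: "nat \<Rightarrow> 'a::idom poly"
  assumes "cf_admissible A"
  shows "k \<le> degree (cf_Q A (Suc k))"
proof -
  have "k = (\<Sum>i<k. 1)" by simp
  also have "\<dots> \<le> (\<Sum>i<k. degree (A (Suc i)))"
    by (rule sum_mono) (use assms in \<open>simp add: cf_admissible_def\<close>)
  finally show ?thesis using cf_Q_nonzero_degree[OF assms, of k] by simp
qed

lemma degree_cf_Q_less_cf_P:
  fixes A :: "nat \<Rightarrow> 'a::idom poly"
  assumes "\<forall>i. 1 \<le> degree (A i)"
  shows "cf_Q A k = 0 \<or> degree (cf_Q A k) < degree (cf_P A k)"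
proof (cases k)
  case (Suc j)
  have "degree (cf_Q A (Suc j)) = (\<Sum>i<j. degree (A (Suc i)))"
    using cf_P_nonzero_degree[of "\<lambda>i. A (Suc i)" j] assms by (simp add: cf_Q_Suc_eq_cf_P_tail)
  also have "\<dots> < degree (A 0) + (\<Sum>i<j. degree (A (Suc i)))"
    using assms[rule_format, of 0] by simp
  also have "\<dots> = (\<Sum>i<Suc j. degree (A i))"
    by (rule sum.lessThan_Suc_shift[symmetric])
  also have "\<dots> = degree (cf_P A (Suc j))"
    using cf_P_nonzero_degree[OF assms] by simp
  finally show ?thesis using Suc by simp
qed simp

lemma degree_cf_P_le_cf_Q:
  fixes A :: "nat \<Rightarrow> 'a::idom poly"
  assumes "cf_admissible A" "A 0 = 0"
  shows "degree (cf_P A (Suc k)) \<le> degree (cf_Q A (Suc k))"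
  using degree_cf_Q_less_cf_P[of "\<lambda>i. A (Suc i)" k] assms
  by (auto simp: cf_P_Suc_eq_cf_Q_tail cf_Q_Suc_eq_cf_P_tail cf_admissible_def)

lemma cf_P_Suc_decompose:
  fixes B :: "nat \<Rightarrow> 'a::idom poly"
  assumes "\<forall>i. 1 \<le> degree (B i)"
  obtains R where "cf_P B (Suc j) = B j * cf_P B j + R" "R = 0 \<or> degree R < degree (cf_P B j)"
proof (cases j)
  case (Suc j')
  have "degree (cf_P B j') < degree (cf_P B (Suc j'))"
    using cf_P_nonzero_degree[OF assms, of j'] cf_P_nonzero_degree[OF assms, of "Suc j'"]
      assms[rule_format, of j'] by (simp del: cf_P.simps)
  then show ?thesis using that[of "cf_P B j'"] Suc by simp
qed (use that[of 0] in simp)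

section \<open>The value of a continued fraction\<close>

definition cf_conv :: "(nat \<Rightarrow> 'a::field poly) \<Rightarrow> nat \<Rightarrow> 'a fls" where
  "cf_conv A k = poly_to_fls (cf_P A (Suc k)) / poly_to_fls (cf_Q A (Suc k))"

lemma cf_conv_Suc_diff:
  fixes A :: "nat \<Rightarrow> 'a::field poly"
  assumes "cf_admissible A"
  shows "vanishes_below (int (degree (cf_Q A (Suc k)) + degree (cf_Q A (Suc (Suc k)))))
           (cf_conv A (Suc k) - cf_conv A k)"
proof -
  let ?P = "\<lambda>j. poly_to_fls (cf_P A j)" and ?Q = "\<lambda>j. poly_to_fls (cf_Q A j)"
  have nz: "cf_Q A (Suc k) \<noteq> 0" "cf_Q A (Suc (Suc k)) \<noteq> 0"
    using cf_Q_nonzero_degree[OF assms] by blast+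
  have "cf_conv A (Suc k) - cf_conv A k
      = (?P (Suc (Suc k)) * ?Q (Suc k) - ?P (Suc k) * ?Q (Suc (Suc k)))
        * inverse (?Q (Suc k) * ?Q (Suc (Suc k)))"
    using nz by (simp add: cf_conv_def field_simps del: cf_P.simps cf_Q.simps)
  also have "\<dots> = poly_to_fls ((-1) ^ Suc (Suc k))
      * inverse (poly_to_fls (cf_Q A (Suc k) * cf_Q A (Suc (Suc k))))"
    using cf_det[of A "Suc k"] by (metis poly_to_fls_diff poly_to_fls_mult)
  finally show ?thesis
    using vanishes_below_mult[OF vanishes_below_poly_to_fls vanishes_below_inverse,
        of "(-1) ^ Suc (Suc k)" "poly_to_fls (cf_Q A (Suc k) * cf_Q A (Suc (Suc k)))"] nz
    by (simp add: fls_subdegree_poly_to_fls degree_mult_eq degree_power_eq add.commute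
        del: cf_Q.simps power_Suc)
qed

lemma cf_conv_diff:
  fixes A :: "nat \<Rightarrow> 'a::field poly"
  assumes "cf_admissible A" "k \<le> j"
  shows "vanishes_below (int (degree (cf_Q A (Suc k)) + degree (cf_Q A (Suc (Suc k)))))
           (cf_conv A j - cf_conv A k)"
  using assms(2)
proof (induction j rule: dec_induct)
  case (step j)
  have "degree (cf_Q A (Suc k)) \<le> degree (cf_Q A (Suc j))"
    "degree (cf_Q A (Suc (Suc k))) \<le> degree (cf_Q A (Suc (Suc j)))"
    using step(1) by (simp_all add: degree_cf_Q_mono[OF assms(1)] del: cf_Q.simps)
  then have "vanishes_below (int (degree (cf_Q A (Suc k)) + degree (cf_Q A (Suc (Suc k)))))
      (cf_conv A (Suc j) - cf_conv A j)"
    by (intro vanishes_below_mono[OF cf_conv_Suc_diff[OF assms(1)]]) simp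
  with step(3) show ?case
    using vanishes_below_add by fastforce
qed simp

lemma cf_conv_diff_2k:
  fixes A :: "nat \<Rightarrow> 'a::field poly"
  assumes "cf_admissible A" "k \<le> j"
  shows "vanishes_below (2 * int k + 1) (cf_conv A j - cf_conv A k)"
  using degree_cf_Q_ge[OF assms(1), of k] degree_cf_Q_ge[OF assms(1), of "Suc k"]
  by (intro vanishes_below_mono[OF cf_conv_diff[OF assms]]) simp

text \<open>The coefficient of \<open>T^{-j}\<close> of the convergents is constant from the \<open>j\<close>-th one on, which
  yields the limit coefficientwise.\<close>

lemma cf_conv_converges:
  fixes A :: "nat \<Rightarrow> 'a::field poly"
  assumes "cf_admissible A"
  shows "\<exists>x. fls_tendsto (cf_conv A) x"
proof -
  define x where
    "x = cf_conv A 0 + fps_to_fls (Abs_fps (\<lambda>i. (cf_conv A i - cf_conv A 0) $$ int i))"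
  have approx: "vanishes_below (2 * int k + 1) (x - cf_conv A k)" for k
    unfolding vanishes_below_def
  proof (intro allI impI)
    fix j :: int assume j: "j < 2 * int k + 1"
    show "(x - cf_conv A k) $$ j = 0"
    proof (cases "j \<le> 0")
      case True
      then show ?thesis
        using cf_conv_diff_2k[OF assms, of 0 k] by (simp add: x_def vanishes_below_def)
    next
      case False
      have "cf_conv A (nat j) $$ j = cf_conv A k $$ j"
        using cf_conv_diff_2k[OF assms, of k "nat j"] cf_conv_diff_2k[OF assms, of "nat j" k]
          j False
        by (cases "k \<le> nat j") (auto simp: vanishes_below_def)
      then show ?thesis using False by (simp add: x_def)
    qed
  qed
  have "\<forall>k\<ge>nat N. vanishes_below N (x - cf_conv A k)" for N
  proof (intro allI impI)
    fix k assume "nat N \<le> k"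
    then show "vanishes_below N (x - cf_conv A k)"
      by (intro vanishes_below_mono[OF approx[of k]]) linarith
  qed
  then have "fls_tendsto (cf_conv A) x"
    unfolding fls_tendsto_def eventually_sequentially by blast
  then show ?thesis ..
qed

lemma fls_tendsto_cf_value:
  fixes A :: "nat \<Rightarrow> 'a::{field,finite} poly"
  assumes "cf_admissible A"
  shows "fls_tendsto (cf_conv A) (cf_value A)"
proof -
  obtain x where x: "fls_tendsto (cf_conv A) x" using cf_conv_converges[OF assms] ..
  have "cf_value A = x"
    unfolding cf_value_def
  proof (rule the_equality)
    show "\<forall>e>0. \<exists>K. \<forall>k\<ge>K. fabs (x - poly_to_fls (cf_num A k) / poly_to_fls (cf_den A k)) < e"
      using x by (simp add: fls_tendsto_iff_fabs cf_conv_def cf_num_def cf_den_def)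
  next
    fix y
    assume "\<forall>e>0. \<exists>K. \<forall>k\<ge>K. fabs (y - poly_to_fls (cf_num A k) / poly_to_fls (cf_den A k)) < e"
    then have "fls_tendsto (cf_conv A) y"
      by (simp add: fls_tendsto_iff_fabs cf_conv_def cf_num_def cf_den_def)
    then show "y = x" using x fls_tendsto_unique by blast
  qed
  then show ?thesis using x by simp
qed

lemma cf_value_approx:
  fixes A :: "nat \<Rightarrow> 'a::{field,finite} poly"
  assumes "cf_admissible A"
  shows "vanishes_below (int (degree (cf_Q A (Suc k)) + degree (cf_Q A (Suc (Suc k)))))
           (cf_value A - cf_conv A k)"
proof -
  let ?N = "int (degree (cf_Q A (Suc k)) + degree (cf_Q A (Suc (Suc k))))"
  obtain j where j: "vanishes_below ?N (cf_value A - cf_conv A (max j k))"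
    using fls_tendsto_cf_value[OF assms] unfolding fls_tendsto_def eventually_sequentially
    by (meson max.cobounded1)
  have "vanishes_below ?N
      ((cf_value A - cf_conv A (max j k)) + (cf_conv A (max j k) - cf_conv A k))"
    using j cf_conv_diff[OF assms, of k "max j k"] by (intro vanishes_below_add) auto
  then show ?thesis by simp
qed

definition fls_irrational :: "'a::field fls \<Rightarrow> bool" where
  "fls_irrational x \<longleftrightarrow> (\<forall>u v. v \<noteq> 0 \<longrightarrow> poly_to_fls v * x \<noteq> poly_to_fls u)"

lemma cf_value_rational_imp_convergents:
  fixes A :: "nat \<Rightarrow> 'a::{field,finite} poly"
  assumes "cf_admissible A" "poly_to_fls v * cf_value A = poly_to_fls u" "degree v \<le> k"
  shows "v * cf_P A (Suc k) = u * cf_Q A (Suc k)"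
proof -
  let ?q = "poly_to_fls (cf_Q A (Suc k))"
  have nz: "cf_Q A (Suc k) \<noteq> 0" using cf_Q_nonzero_degree[OF assms(1)] by blast
  have "poly_to_fls (v * cf_P A (Suc k) - u * cf_Q A (Suc k))
      = - (poly_to_fls v * ?q * (cf_value A - cf_conv A k))"
    using nz by (simp add: poly_to_fls_diff poly_to_fls_mult cf_conv_def field_simps
        flip: assms(2) del: cf_P.simps cf_Q.simps)
  moreover have "vanishes_below (- int (degree v) + - int (degree (cf_Q A (Suc k)))
      + int (degree (cf_Q A (Suc k)) + degree (cf_Q A (Suc (Suc k)))))
      (poly_to_fls v * ?q * (cf_value A - cf_conv A k))"
    by (intro vanishes_below_mult vanishes_below_poly_to_fls cf_value_approx[OF assms(1)])
  ultimately have "vanishes_below 1 (poly_to_fls (v * cf_P A (Suc k) - u * cf_Q A (Suc k)))"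
    using degree_cf_Q_ge[OF assms(1), of "Suc k"] assms(3)
    by (auto intro!: vanishes_below_uminus elim!: vanishes_below_mono)
  then show ?thesis by (simp add: vanishes_below_1_poly_to_fls)
qed

lemma cf_value_irrational:
  fixes A :: "nat \<Rightarrow> 'a::{field,finite} poly"
  assumes "cf_admissible A"
  shows "fls_irrational (cf_value A)"
  unfolding fls_irrational_def
proof (intro allI impI notI)
  fix u v :: "'a poly"
  assume "v \<noteq> 0" and eq: "poly_to_fls v * cf_value A = poly_to_fls u"
  define k where "k = degree v"
  define p1 where "p1 = cf_P A (Suc k)"
  define p2 where "p2 = cf_P A (Suc (Suc k))"
  define q1 where "q1 = cf_Q A (Suc k)"
  define q2 where "q2 = cf_Q A (Suc (Suc k))"
  have e1: "v * p1 = u * q1" and e2: "v * p2 = u * q2"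
    using cf_value_rational_imp_convergents[OF assms eq, of k]
      cf_value_rational_imp_convergents[OF assms eq, of "Suc k"]
    by (simp_all add: k_def p1_def p2_def q1_def q2_def del: cf_P.simps cf_Q.simps)
  have "v * (p2 * q1 - p1 * q2) = (v * p2) * q1 - (v * p1) * q2"
    by (simp add: algebra_simps)
  also have "\<dots> = 0"
    unfolding e1 e2 by (simp add: algebra_simps)
  finally have "v * (p2 * q1 - p1 * q2) = 0" .
  moreover have "p2 * q1 - p1 * q2 = (-1) ^ Suc (Suc k)"
    unfolding p1_def p2_def q1_def q2_def by (rule cf_det)
  ultimately show False using \<open>v \<noteq> 0\<close> by simp
qed

lemma cf_value_shift:
  fixes A :: "nat \<Rightarrow> 'a::{field,finite} poly" and s :: nat
  assumes "cf_admissible A"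
  defines "B \<equiv> \<lambda>i. A (Suc s + i)"
  shows "cf_value A * (poly_to_fls (cf_Q A (Suc s)) * cf_value B + poly_to_fls (cf_Q A s))
       = poly_to_fls (cf_P A (Suc s)) * cf_value B + poly_to_fls (cf_P A s)"
proof -
  have adm_B: "cf_admissible B" using assms(1) by (simp add: cf_admissible_def B_def)
  let ?q1 = "poly_to_fls (cf_Q A (Suc s))" and ?q0 = "poly_to_fls (cf_Q A s)"
  let ?p1 = "poly_to_fls (cf_P A (Suc s))" and ?p0 = "poly_to_fls (cf_P A s)"
  have conv: "cf_conv A (k + Suc s) * (?q1 * cf_conv B k + ?q0) = ?p1 * cf_conv B k + ?p0" for k
  proof -
    let ?X = "poly_to_fls (cf_P B (Suc k))" and ?Y = "poly_to_fls (cf_Q B (Suc k))"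
    have Y: "?Y \<noteq> 0" using cf_Q_nonzero_degree[OF adm_B] by simp
    have num: "poly_to_fls (cf_P A (Suc (k + Suc s))) = ?p1 * ?X + ?p0 * ?Y"
      and den: "poly_to_fls (cf_Q A (Suc (k + Suc s))) = ?q1 * ?X + ?q0 * ?Y"
      using cf_shift[of A s k] by (simp_all add: B_def poly_to_fls_add poly_to_fls_mult add.commute
          del: cf_P.simps cf_Q.simps)
    have D: "?q1 * ?X + ?q0 * ?Y \<noteq> 0"
      using cf_Q_nonzero_degree[OF assms(1), of "k + Suc s"] den by (metis poly_to_fls_eq_0_iff)
    have "?q1 * cf_conv B k + ?q0 = (?q1 * ?X + ?q0 * ?Y) / ?Y"
      using Y by (simp add: cf_conv_def field_simps del: cf_P.simps cf_Q.simps)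
    moreover have "?p1 * cf_conv B k + ?p0 = (?p1 * ?X + ?p0 * ?Y) / ?Y"
      using Y by (simp add: cf_conv_def field_simps del: cf_P.simps cf_Q.simps)
    ultimately show ?thesis
      using D unfolding cf_conv_def[of A] num den by simp
  qed
  have lim_A: "fls_tendsto (\<lambda>k. cf_conv A (k + Suc s)) (cf_value A)"
    by (rule fls_tendsto_offset[OF fls_tendsto_cf_value[OF assms(1)]])
  have lim_B: "fls_tendsto (\<lambda>k. c * cf_conv B k + d) (c * cf_value B + d)" for c d
    by (rule fls_tendsto_add[OF fls_tendsto_mult[OF fls_tendsto_const
          fls_tendsto_cf_value[OF adm_B]] fls_tendsto_const])
  note fls_tendsto_mult[OF lim_A lim_B[of ?q1 ?q0]]
  moreover note lim_B[of ?p1 ?p0]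
  ultimately show ?thesis
    unfolding conv by (rule fls_tendsto_unique)
qed

section \<open>Minimal polynomials of quadratic irrationals\<close>

definition poly_fls :: "'a::field poly poly \<Rightarrow> 'a fls \<Rightarrow> 'a fls" where
  "poly_fls P x = poly (map_poly poly_to_fls P) x"

lemma poly_fls_0 [simp]: "poly_fls 0 x = 0"
  by (simp add: poly_fls_def)

lemma poly_fls_pCons: "poly_fls (pCons a P) x = poly_to_fls a + x * poly_fls P x"
  by (simp add: poly_fls_def map_poly_pCons)

lemma poly_fls_add: "poly_fls (P + Q) x = poly_fls P x + poly_fls Q x"
proof -
  have "map_poly poly_to_fls (P + Q) = map_poly poly_to_fls P + map_poly poly_to_fls Q"
    by (rule poly_eqI) (simp add: coeff_map_poly poly_to_fls_add)
  then show ?thesis by (simp add: poly_fls_def)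
qed

lemma poly_fls_smult: "poly_fls (smult c P) x = poly_to_fls c * poly_fls P x"
  by (simp add: poly_fls_def map_poly_smult poly_to_fls_mult)

lemma poly_fls_mult: "poly_fls (P * Q) x = poly_fls P x * poly_fls Q x"
  by (induction P) (simp_all add: poly_fls_add poly_fls_smult poly_fls_pCons algebra_simps)

lemma poly_fls_linear_nonzero:
  assumes "fls_irrational x" "degree F \<le> 1" "F \<noteq> 0"
  shows "poly_fls F x \<noteq> 0"
proof
  define a b where "a = coeff F 0" and "b = coeff F 1"
  have F: "F = [:a, b:]"
    using assms(2) by (auto simp: poly_eq_iff a_def b_def coeff_pCons coeff_eq_0 split: nat.split)
  assume "poly_fls F x = 0"
  then have "poly_to_fls b * x = poly_to_fls (- a)"
    by (simp add: F poly_fls_pCons poly_to_fls_uminus algebra_simps eq_neg_iff_add_eq_0)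
  with assms(1) have "b = 0" by (auto simp: fls_irrational_def)
  with \<open>poly_to_fls b * x = poly_to_fls (- a)\<close> have "a = 0"
    by (metis add.inverse_neutral minus_equation_iff mult_zero_left poly_to_fls_0
        poly_to_fls_eq_0_iff)
  with \<open>b = 0\<close> F assms(3) show False by simp
qed

definition primitive :: "'a::algebraic_semidom poly \<Rightarrow> bool" where
  "primitive P \<longleftrightarrow> (\<forall>g. (\<forall>i. g dvd coeff P i) \<longrightarrow> is_unit g)"

lemma prime_elem_dvd_coeffs_mult:
  fixes P Q :: "'a::comm_ring_1 poly"
  assumes p: "prime_elem p" and PQ: "\<forall>i. p dvd coeff (P * Q) i" and P: "\<not> (\<forall>i. p dvd coeff P i)"
  shows "p dvd coeff Q j"
proof -
  define i0 where "i0 = (LEAST i. \<not> p dvd coeff P i)"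
  obtain i1 where "\<not> p dvd coeff P i1" using P by blast
  then have i0: "\<not> p dvd coeff P i0" unfolding i0_def by (rule LeastI)
  have below: "p dvd coeff P i" if "i < i0" for i
    using not_less_Least[OF that[unfolded i0_def]] by blast
  show ?thesis
  proof (induction j rule: less_induct)
    case (less j)
    let ?t = "\<lambda>i. coeff P i * coeff Q (i0 + j - i)"
    have rest: "p dvd (\<Sum>i\<in>{..i0 + j} - {i0}. ?t i)"
    proof (rule dvd_sum)
      fix i assume "i \<in> {..i0 + j} - {i0}"
      then have "i < i0 \<or> i0 + j - i < j" by auto
      then show "p dvd ?t i" using below less by auto
    qed
    have "coeff (P * Q) (i0 + j) = ?t i0 + (\<Sum>i\<in>{..i0 + j} - {i0}. ?t i)"
      by (simp add: coeff_mult sum.remove[of "{..i0 + j}" i0])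
    then have "p dvd ?t i0"
      using PQ[rule_format, of "i0 + j"] by (simp add: dvd_add_left_iff[OF rest])
    then have "p dvd coeff P i0 * coeff Q j" by simp
    then show ?case using i0 p prime_elem_dvd_multD by blast
  qed
qed

lemma exists_irreducible_factor:
  fixes l :: "'a::field poly"
  shows "l \<noteq> 0 \<Longrightarrow> \<not> is_unit l \<Longrightarrow> \<exists>p. irreducible p \<and> p dvd l"
proof (induction "degree l" arbitrary: l rule: less_induct)
  case less
  show ?case
  proof (cases "irreducible l")
    case False
    then obtain a b where ab: "l = a * b" "\<not> is_unit a" "\<not> is_unit b"
      using less.prems unfolding irreducible_def by blast
    then have "a \<noteq> 0" "b \<noteq> 0" "degree b \<noteq> 0" using less.prems is_unit_iff_degree by auto
    then have "degree a < degree l" using ab(1) by (simp add: degree_mult_eq)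
    then obtain p where "irreducible p" "p dvd a" using less \<open>a \<noteq> 0\<close> ab(2) by blast
    then show ?thesis using ab(1) by auto
  qed auto
qed

lemma primitive_dvd_smult_imp_dvd:
  fixes P Q :: "'a::field poly poly"
  assumes prim: "primitive P"
  shows "l \<noteq> 0 \<Longrightarrow> P dvd smult l Q \<Longrightarrow> P dvd Q"
proof (induction "degree l" arbitrary: l Q rule: less_induct)
  case less
  then obtain R where R: "smult l Q = P * R" by blast
  show ?case
  proof (cases "is_unit l")
    case True
    then obtain li where "1 = l * li" by blast
    then have "Q = smult li (smult l Q)" by (simp add: mult.commute)
    also have "\<dots> = P * smult li R" by (simp add: R)
    finally show ?thesis by (rule dvdI)
  next
    case False
    obtain p where p: "irreducible p" "p dvd l"
      using exists_irreducible_factor[OF less.prems(1) False] by blast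
    then obtain l' where l': "l = p * l'" by blast
    have "coeff (P * R) i = p * (l' * coeff Q i)" for i by (simp flip: R add: l' mult.assoc)
    then have "\<forall>i. p dvd coeff (P * R) i" by simp
    moreover have "\<not> (\<forall>i. p dvd coeff P i)"
      using prim p(1) irreducible_not_unit unfolding primitive_def by blast
    ultimately have "\<forall>i. p dvd coeff R i"
      using prime_elem_dvd_coeffs_mult[OF field_poly_irreducible_imp_prime[OF p(1)]] by blast
    define R' where "R' = map_poly (\<lambda>c. c div p) R"
    have "R = smult p R'"
      using \<open>\<forall>i. p dvd coeff R i\<close> by (intro poly_eqI) (simp add: R'_def coeff_map_poly)
    have "p \<noteq> 0" using p(1) by auto
    have "degree p \<noteq> 0"
      using p(1) \<open>p \<noteq> 0\<close> is_unit_iff_degree irreducible_not_unit by blast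
    have "smult p (smult l' Q) = smult p (P * R')"
      using R by (simp add: l' \<open>R = smult p R'\<close>)
    then have "smult p (smult l' Q - P * R') = 0" by (simp only: smult_diff_right) simp
    then have "smult l' Q = P * R'" using \<open>p \<noteq> 0\<close> by simp
    moreover have "l' \<noteq> 0" using less.prems(1) l' by auto
    moreover have "degree l' < degree l"
      using l' \<open>l' \<noteq> 0\<close> \<open>p \<noteq> 0\<close> \<open>degree p \<noteq> 0\<close> by (simp add: degree_mult_eq)
    ultimately show ?thesis using less(1) by (metis dvd_triv_left)
  qed
qed

lemma irreducible_quadratic:
  fixes P :: "'a::field poly poly"
  assumes x: "fls_irrational x" and deg: "degree P = 2" and prim: "primitive P"
    and root: "poly_fls P x = 0"
  shows "irreducible P"
proof (rule irreducibleI)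
  show "P \<noteq> 0" "\<not> is_unit P" using deg by (auto simp: is_unit_poly_iff)
  fix F G assume FG: "P = F * G"
  then have "F \<noteq> 0" "G \<noteq> 0" using \<open>P \<noteq> 0\<close> by auto
  then have dFG: "degree F + degree G = 2" using FG deg by (simp add: degree_mult_eq)
  have unit: "is_unit H" if "degree H = 0" "P = H * K" for H K
  proof -
    have H: "H = [:coeff H 0:]" using that(1) by (rule degree_0_id[symmetric])
    then have "P = smult (coeff H 0) K"
      using that(2) by (metis mult.left_neutral mult_smult_left smult_one)
    then have "is_unit (coeff H 0)" using prim by (simp add: primitive_def)
    then show ?thesis by (subst H) (simp add: is_unit_const_poly_iff)
  qed
  show "is_unit F \<or> is_unit G"
  proof (cases "degree F = 0 \<or> degree G = 0")
    case True
    then show ?thesis using unit FG mult.commute by metis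
  next
    case False
    then have "degree F \<le> 1" "degree G \<le> 1" using dFG by auto
    then have "poly_fls F x * poly_fls G x \<noteq> 0"
      using poly_fls_linear_nonzero[OF x] \<open>F \<noteq> 0\<close> \<open>G \<noteq> 0\<close> by simp
    then show ?thesis using root FG poly_fls_mult by metis
  qed
qed

lemma quadratic_root_minpoly_unique:
  fixes P P' :: "'a::field poly poly"
  assumes x: "fls_irrational x" and deg: "degree P = 2" and prim: "primitive P"
    and root: "poly_fls P x = 0" and irr: "irreducible P'" and root': "poly_fls P' x = 0"
  shows "\<exists>u. is_unit u \<and> P' = smult u P"
proof -
  have "P \<noteq> 0" using deg by auto
  obtain a Q where a: "a \<noteq> 0" and div: "smult a P' = P * Q + pseudo_mod P' P"
    using pseudo_mod(1)[OF \<open>P \<noteq> 0\<close>] by blast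
  have "poly_fls (pseudo_mod P' P) x = 0"
    using arg_cong[OF div, of "\<lambda>F. poly_fls F x"] root root'
    by (simp add: poly_fls_add poly_fls_mult poly_fls_smult)
  moreover have "pseudo_mod P' P = 0 \<or> degree (pseudo_mod P' P) \<le> 1"
    using pseudo_mod(2)[OF \<open>P \<noteq> 0\<close>, of P'] deg by auto
  ultimately have "pseudo_mod P' P = 0" using poly_fls_linear_nonzero[OF x] by blast
  then have "P dvd smult a P'" using div by simp
  then obtain K where K: "P' = P * K" using primitive_dvd_smult_imp_dvd[OF prim a] by blast
  have "\<not> is_unit P" using deg by (auto simp: is_unit_poly_iff)
  then have "is_unit K" using irr K irreducibleD by blast
  then obtain u where "K = [:u:]" "is_unit u" by (auto simp: is_unit_poly_iff)
  then show ?thesis using K by auto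
qed

lemma height_eq_Max_coeffs:
  fixes x :: "'a::{field,finite} fls"
  assumes x: "fls_irrational x" and deg: "degree P = 2" and prim: "primitive P"
    and monic: "lead_coeff (lead_coeff P) = 1" and root: "poly_fls P x = 0"
  shows "height x = Max ((\<lambda>i. fabs (poly_to_fls (coeff P i))) ` {..2})"
  unfolding height_def
proof (rule the_equality)
  have "is_minpoly x P"
    using deg monic root irreducible_quadratic[OF x deg prim root] prim
    by (simp add: is_minpoly_def poly_fls_def primitive_def)
  then show "\<exists>P'. is_minpoly x P' \<and> Max ((\<lambda>i. fabs (poly_to_fls (coeff P i))) ` {..2})
      = Max ((\<lambda>i. fabs (poly_to_fls (coeff P' i))) ` {..degree P'})"
    using deg by metis
next
  fix h
  assume "\<exists>P'. is_minpoly x P' \<and> h = Max ((\<lambda>i. fabs (poly_to_fls (coeff P' i))) ` {..degree P'})"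
  then obtain P' where P': "is_minpoly x P'"
    and h: "h = Max ((\<lambda>i. fabs (poly_to_fls (coeff P' i))) ` {..degree P'})" by blast
  have "irreducible P'" "poly_fls P' x = 0" using P' by (auto simp: is_minpoly_def poly_fls_def)
  then obtain u where "is_unit u" and P'_eq: "P' = smult u P"
    using quadratic_root_minpoly_unique[OF x deg prim root] by blast
  then have "u \<noteq> 0" by auto
  moreover from \<open>is_unit u\<close> \<open>u \<noteq> 0\<close> have "degree u = 0" by (simp add: is_unit_iff_degree)
  ultimately have "degree P' = 2"
    and "fabs (poly_to_fls (coeff P' i)) = fabs (poly_to_fls (coeff P i))" for i
    using deg P'_eq by (simp_all add: fabs_poly_to_fls degree_mult_eq)
  then show "h = Max ((\<lambda>i. fabs (poly_to_fls (coeff P i))) ` {..2})" using h by simp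
qed

text \<open>The library's \<open>content\<close> needs a gcd on the coefficient ring, which a generic
  \<open>'a::field poly\<close> lacks; a common divisor of maximal degree takes its place.\<close>

lemma exists_primitive_part:
  fixes P :: "'a::field poly poly"
  assumes "P \<noteq> 0"
  obtains g P0 where "g \<noteq> 0" "P = smult g P0" "primitive P0"
proof -
  define S where "S = {d. \<forall>i. d dvd coeff P i}"
  have "degree d < Suc (degree (lead_coeff P))" if "d \<in> S" for d
    using that assms by (auto simp: S_def less_Suc_eq_le intro: dvd_imp_degree_le)
  moreover have "1 \<in> S" by (simp add: S_def)
  ultimately obtain g where g: "g \<in> S" and gmax: "\<And>d. d \<in> S \<Longrightarrow> degree d \<le> degree g"
    using ex_has_greatest_nat[of "\<lambda>d. d \<in> S" 1 degree] by blast
  have nonzero: "d \<noteq> 0" if "d \<in> S" for d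
  proof
    assume "d = 0"
    with that have "coeff P (degree P) = 0" by (simp add: S_def)
    with assms show False by simp
  qed
  then have "g \<noteq> 0" using g by blast
  define P0 where "P0 = map_poly (\<lambda>c. c div g) P"
  have P: "P = smult g P0"
    using g by (intro poly_eqI) (simp add: S_def P0_def coeff_map_poly)
  have "primitive P0"
    unfolding primitive_def
  proof (intro allI impI)
    fix h assume "\<forall>i. h dvd coeff P0 i"
    then have "h * g \<in> S" by (auto simp: S_def P mult.commute[of h] mult_dvd_mono)
    then have "degree (h * g) \<le> degree g" by (rule gmax)
    moreover have "h \<noteq> 0" using nonzero[OF \<open>h * g \<in> S\<close>] by auto
    ultimately show "is_unit h" using \<open>g \<noteq> 0\<close> by (simp add: degree_mult_eq is_unit_iff_degree)
  qed
  then show ?thesis using that \<open>g \<noteq> 0\<close> P by blast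
qed

lemma primitive_smult_unit: "is_unit c \<Longrightarrow> primitive P \<Longrightarrow> primitive (smult c P)"
  by (simp add: primitive_def dvd_mult_unit_iff')

lemma height_quadratic_bounds:
  fixes x :: "'a::{field,finite} fls" and P :: "'a poly poly"
  assumes x: "fls_irrational x" and deg: "degree P = 2" and root: "poly_fls P x = 0"
    and N: "\<forall>i. degree (coeff P i) \<le> N"
  obtains g where "\<forall>i. g dvd coeff P i" "height x \<le> real CARD('a) ^ N"
    "real CARD('a) ^ (degree (lead_coeff P) - degree g) \<le> height x"
proof -
  define Q where "Q = real CARD('a)"
  have "1 \<le> Q" using card_field_ge_2[where 'a = 'a] by (simp add: Q_def)
  obtain g P0 where g: "g \<noteq> 0" and P: "P = smult g P0" and prim: "primitive P0"
    using exists_primitive_part[of P] deg by force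
  have deg0: "degree P0 = 2" using deg g P by simp
  then have "P0 \<noteq> 0" by auto
  then have "lead_coeff P0 \<noteq> 0" by simp
  define k where "k = inverse (lead_coeff (lead_coeff P0))"
  have "k \<noteq> 0" using \<open>lead_coeff P0 \<noteq> 0\<close> by (simp add: k_def)
  define Pn where "Pn = smult [:k:] P0"
  have coeff_Pn: "fabs (poly_to_fls (coeff Pn i)) = fabs (poly_to_fls (coeff P0 i))" for i
    using \<open>k \<noteq> 0\<close> by (simp add: Pn_def fabs_poly_to_fls degree_mult_eq)
  have "degree Pn = 2" using deg0 \<open>k \<noteq> 0\<close> by (simp add: Pn_def)
  moreover have "primitive Pn"
    unfolding Pn_def using prim \<open>k \<noteq> 0\<close>
    by (intro primitive_smult_unit) (simp_all add: is_unit_const_poly_iff dvd_field_iff)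
  moreover have "lead_coeff (lead_coeff Pn) = 1"
    using deg0 \<open>k \<noteq> 0\<close> \<open>lead_coeff P0 \<noteq> 0\<close> by (simp add: Pn_def k_def degree_mult_eq)
  moreover have "poly_fls Pn x = 0"
    using root g by (simp add: P Pn_def poly_fls_smult)
  ultimately have H: "height x = Max ((\<lambda>i. fabs (poly_to_fls (coeff P0 i))) ` {..2})"
    using height_eq_Max_coeffs[OF x] coeff_Pn by simp
  have "fabs (poly_to_fls (coeff P0 i)) \<le> Q ^ N" for i
  proof (cases "coeff P0 i = 0")
    case False
    then have "degree (coeff P0 i) \<le> N" using N[rule_format, of i] g by (simp add: P degree_mult_eq)
    then show ?thesis using False \<open>1 \<le> Q\<close> by (simp add: fabs_poly_to_fls Q_def power_increasing)
  qed (use \<open>1 \<le> Q\<close> in \<open>simp add: fabs_def\<close>)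
  then have "height x \<le> Q ^ N" unfolding H by simp
  moreover have "Q ^ (degree (lead_coeff P) - degree g) \<le> height x"
  proof -
    have "Q ^ (degree (lead_coeff P) - degree g) = fabs (poly_to_fls (coeff P0 2))"
      using \<open>lead_coeff P0 \<noteq> 0\<close> g deg0 by (simp add: P fabs_poly_to_fls Q_def degree_mult_eq)
    also have "\<dots> \<le> height x" unfolding H by (intro Max_ge) auto
    finally show ?thesis .
  qed
  moreover have "\<forall>i. g dvd coeff P i" by (simp add: P)
  ultimately show ?thesis using that by (simp add: Q_def)
qed

section \<open>Binary quadratic forms and period matrices\<close>

text \<open>A binary quadratic form \<open>(A, B, C)\<close> stands for \<open>A X\<^sup>2 + B X Y + C Y\<^sup>2\<close>; \<open>qf_subst F M\<close>
  is the form \<open>F (a X + b Y, c X + d Y)\<close> for \<open>M = (a, b, c, d)\<close>.\<close>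

type_synonym 'a qform = "'a \<times> 'a \<times> 'a"

definition qf_subst :: "'a::comm_ring_1 qform \<Rightarrow> 'a mat2 \<Rightarrow> 'a qform" where
  "qf_subst F M = (case F of (A, B, C) \<Rightarrow> case M of (a, b, c, d) \<Rightarrow>
     (A * a * a + B * a * c + C * c * c,
      2 * A * a * b + B * (a * d + b * c) + 2 * C * c * d,
      A * b * b + B * b * d + C * d * d))"

definition qf_dvd :: "'a::comm_ring_1 \<Rightarrow> 'a qform \<Rightarrow> bool" where
  "qf_dvd g F \<longleftrightarrow> (case F of (A, B, C) \<Rightarrow> g dvd A \<and> g dvd B \<and> g dvd C)"

definition qf_poly :: "'a::comm_ring_1 qform \<Rightarrow> 'a poly" where
  "qf_poly F = (case F of (A, B, C) \<Rightarrow> [:C, B, A:])"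

lemma degree_qf_poly: "A \<noteq> 0 \<Longrightarrow> degree (qf_poly (A, B, C)) = 2"
  and coeff_qf_poly_2: "coeff (qf_poly (A, B, C)) 2 = A"
  by (simp_all add: qf_poly_def numeral_2_eq_2)

lemma qf_subst_mult: "qf_subst (qf_subst F M) N = qf_subst F (mat2_mult M N)"
  by (cases F; cases M; cases N) (simp add: qf_subst_def mat2_mult_def algebra_simps)

lemma qf_subst_scalar: "qf_subst (A, B, C) (e, 0, 0, e) = (e * e * A, e * e * B, e * e * C)"
  by (simp add: qf_subst_def algebra_simps)

lemma qf_dvd_subst: "qf_dvd g F \<Longrightarrow> qf_dvd g (qf_subst F M)"
  by (cases F; cases M) (auto simp: qf_dvd_def qf_subst_def)

lemma qf_dvd_subst_unimodular:
  assumes "is_unit (mat2_det M)" "qf_dvd g (qf_subst F M)"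
  shows "qf_dvd g F"
proof -
  obtain a b c d where M: "M = (a, b, c, d)" by (cases M)
  obtain A B C where F: "F = (A, B, C)" by (cases F)
  let ?e = "mat2_det M"
  have "mat2_mult M (d, - b, - c, a) = (?e, 0, 0, ?e)"
    by (simp add: M mat2_mult_def mat2_det_def algebra_simps)
  then have "qf_subst (qf_subst F M) (d, - b, - c, a) = (?e * ?e * A, ?e * ?e * B, ?e * ?e * C)"
    by (simp add: qf_subst_mult F qf_subst_scalar)
  moreover have "is_unit (?e * ?e)" using mult_dvd_mono[OF assms(1) assms(1)] by simp
  ultimately show ?thesis
    using qf_dvd_subst[OF assms(2), of "(d, - b, - c, a)"]
    by (simp add: F qf_dvd_def mult.assoc[symmetric] dvd_mult_unit_iff')
qed

text \<open>If \<open>\<alpha> = M \<gamma>\<close> (as a Moebius transformation) and \<open>\<gamma>\<close> is a root of the form \<open>F\<close>, then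
  \<open>\<alpha>\<close> is a root of \<open>F\<close> transformed by the adjugate of \<open>M\<close>, up to sign.\<close>

lemma qf_subst_root:
  fixes \<alpha> \<gamma> :: "'a::field fls" and p p' q q' P1 P0 Q1 Q0 :: "'a poly"
  assumes \<alpha>: "\<alpha> * (poly_to_fls q * \<gamma> + poly_to_fls q') = poly_to_fls p * \<gamma> + poly_to_fls p'"
    and \<gamma>: "\<gamma> * (poly_to_fls Q1 * \<gamma> + poly_to_fls Q0) = poly_to_fls P1 * \<gamma> + poly_to_fls P0"
  shows "poly_fls (qf_poly (qf_subst (Q1, Q0 - P1, - P0) (- q', p', q, - p))) \<alpha> = 0"
proof -
  let ?u = "poly_to_fls p' - poly_to_fls q' * \<alpha>" and ?w = "poly_to_fls q * \<alpha> - poly_to_fls p"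
  have u: "?u = \<gamma> * ?w" using \<alpha> by (simp add: algebra_simps)
  have "poly_fls (qf_poly (qf_subst (Q1, Q0 - P1, - P0) (- q', p', q, - p))) \<alpha>
      = poly_to_fls Q1 * ?u * ?u + poly_to_fls (Q0 - P1) * ?u * ?w - poly_to_fls P0 * ?w * ?w"
    by (simp add: qf_poly_def qf_subst_def poly_fls_pCons poly_to_fls_add poly_to_fls_diff
        poly_to_fls_uminus poly_to_fls_mult algebra_simps)
  also have "\<dots> = ?w * ?w
      * (\<gamma> * (poly_to_fls Q1 * \<gamma> + poly_to_fls Q0) - poly_to_fls P1 * \<gamma> - poly_to_fls P0)"
    unfolding u by (simp add: poly_to_fls_diff algebra_simps)
  finally show ?thesis using \<gamma> by simp
qed

lemma degree_add_dominated:
  fixes x y :: "'a::ab_group_add poly"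
  assumes "y = 0 \<or> degree y < degree x"
  shows "degree (x + y) = degree x"
  using assms by (auto simp: degree_add_eq_left)

lemma add_dominated_nonzero:
  fixes x y :: "'a::ab_group_add poly"
  assumes "x \<noteq> 0" "y = 0 \<or> degree y < degree x"
  shows "x + y \<noteq> 0"
  using assms by (metis add.right_neutral add_eq_0_iff degree_minus less_irrefl)

lemma degree_qf_subst_le:
  fixes A B C a b c d :: "'a::comm_ring_1 poly"
  assumes F: "degree A \<le> D" "degree B \<le> D" "degree C \<le> D"
    and M: "degree a \<le> y" "degree b \<le> y" "degree c \<le> y" "degree d \<le> y"
  shows "degree (coeff (qf_poly (qf_subst (A, B, C) (a, b, c, d))) i) \<le> 2 * y + D"
proof -
  have t: "degree (X * u * v) \<le> 2 * y + D" if "degree X \<le> D" "degree u \<le> y" "degree v \<le> y"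
    for X u v :: "'a poly"
    using degree_mult_le[of "X * u" v] degree_mult_le[of X u] that by linarith
  have two: "degree (2 * X) \<le> D" if "degree X \<le> D" for X :: "'a poly"
    using degree_mult_le[of 2 X] that by simp
  have "B * (a * d + b * c) = B * a * d + B * b * c" by (simp add: algebra_simps)
  then have "i = 0 \<or> i = 1 \<or> i = 2 \<or> coeff (qf_poly (qf_subst (A, B, C) (a, b, c, d))) i = 0"
    by (auto simp: qf_poly_def qf_subst_def coeff_pCons numeral_2_eq_2 split: nat.split)
  moreover have "degree (A * b * b + B * b * d + C * d * d) \<le> 2 * y + D"
    by (intro degree_add_le t F M)
  moreover have "degree (2 * A * a * b + (B * a * d + B * b * c) + 2 * C * c * d) \<le> 2 * y + D"
    by (intro degree_add_le t two F M)
  moreover have "degree (A * a * a + B * a * c + C * c * c) \<le> 2 * y + D"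
    by (intro degree_add_le t F M)
  ultimately show ?thesis
    using \<open>B * (a * d + b * c) = B * a * d + B * b * c\<close>
    by (auto simp: qf_poly_def qf_subst_def numeral_2_eq_2)
qed

text \<open>The leading coefficient is dominated by \<open>q (P1 q' - P0 q)\<close>, whose degree is governed by
  \<open>w - c\<close>, where \<open>w\<close> ends the period and \<open>c\<close> precedes it.\<close>

lemma degree_qf_subst_leading:
  fixes c w q q' q'' P0 P1 Rr Q0 Q1 :: "'a::idom poly"
  assumes q: "q = c * q' + q''" "q' \<noteq> 0" "c \<noteq> 0" "q'' = 0 \<or> degree q'' < degree q'"
    and P1: "P1 = w * P0 + Rr" "P0 \<noteq> 0" "Rr = 0 \<or> degree Rr < degree P0" "w \<noteq> c"
    and Q: "Q0 = 0 \<or> degree Q0 < degree P0" "degree Q1 < degree P0 + degree w"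
  shows "degree (fst (qf_subst (Q1, Q0 - P1, - P0) (- q', p', q, - p)))
    = degree (w - c) + degree P0 + degree q' + degree q"
proof -
  define h where "h = degree (w - c) + degree P0 + degree q' + degree q"
  have q_dom: "q'' = 0 \<or> degree q'' < degree (c * q')" using q(2-4) by (auto simp: degree_mult_eq)
  have dq: "degree q = degree c + degree q'" and "q \<noteq> 0"
    using degree_add_dominated[OF q_dom] add_dominated_nonzero[OF _ q_dom] q(1-3)
    by (simp_all add: degree_mult_eq)
  define T where "T = ((w - c) * P0 + Rr) * q' - P0 * q''"
  have P_dom: "Rr = 0 \<or> degree Rr < degree ((w - c) * P0)"
    using P1(2-4) by (auto simp: degree_mult_eq)
  have dT1: "degree ((w - c) * P0 + Rr) = degree (w - c) + degree P0" "(w - c) * P0 + Rr \<noteq> 0"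
    using degree_add_dominated[OF P_dom] add_dominated_nonzero[OF _ P_dom] P1(2,4)
    by (simp_all add: degree_mult_eq)
  then have d: "degree (((w - c) * P0 + Rr) * q') = degree (w - c) + degree P0 + degree q'"
    using q(2) by (simp add: degree_mult_eq)
  have T_dom: "- (P0 * q'') = 0 \<or> degree (- (P0 * q'')) < degree (((w - c) * P0 + Rr) * q')"
  proof (cases "q'' = 0")
    case False
    with q(4) P1(2) d show ?thesis by (simp add: degree_mult_eq)
  qed simp
  have dT: "degree T = degree (w - c) + degree P0 + degree q'" "T \<noteq> 0"
    using degree_add_dominated[OF T_dom] add_dominated_nonzero[OF _ T_dom] d dT1(2) q(2)
    by (simp_all add: T_def)
  have "degree (Q1 * q' * q') \<le> degree Q1 + degree q' + degree q'"
    by (metis add_mono_thms_linordered_semiring(3) degree_mult_le order_trans)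
  moreover have "degree w \<le> degree (w - c) + degree c"
    using degree_add_le_max[of "w - c" c] by simp
  ultimately have small1: "degree (Q1 * q' * q') < h"
    using Q(2) dq by (simp add: h_def)
  have small2: "Q0 * q' * q = 0 \<or> degree (Q0 * q' * q) < h"
  proof (cases "Q0 = 0")
    case False
    with Q(1) q(2) dq \<open>q \<noteq> 0\<close> show ?thesis by (simp add: h_def degree_mult_eq)
  qed simp
  have "fst (qf_subst (Q1, Q0 - P1, - P0) (- q', p', q, - p))
      = q * T + (Q1 * q' * q' - Q0 * q' * q)"
    by (simp add: qf_subst_def T_def q P1 algebra_simps)
  also have "degree \<dots> = degree (q * T)"
  proof (rule degree_add_dominated)
    show "Q1 * q' * q' - Q0 * q' * q = 0 \<or> degree (Q1 * q' * q' - Q0 * q' * q) < degree (q * T)"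
      using small1 small2 dT \<open>q \<noteq> 0\<close> by (auto simp: h_def degree_mult_eq intro: degree_diff_less)
  qed
  finally show ?thesis using dT \<open>q \<noteq> 0\<close> by (simp add: degree_mult_eq)
qed

definition mat2_cong_scalar :: "'a::comm_ring_1 \<Rightarrow> 'a \<Rightarrow> 'a mat2 \<Rightarrow> bool" where
  "mat2_cong_scalar g l X \<longleftrightarrow>
     (case X of (a, b, c, d) \<Rightarrow> g dvd a - l \<and> g dvd b \<and> g dvd c \<and> g dvd d - l)"

lemma mat2_cong_scalar_det:
  assumes "mat2_cong_scalar g l X"
  shows "g dvd l * l - mat2_det X"
proof -
  obtain a b c d where X: "X = (a, b, c, d)" by (cases X)
  have dvd: "g dvd a - l" "g dvd b" "g dvd c" "g dvd d - l"
    using assms by (simp_all add: mat2_cong_scalar_def X)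
  have "l * l - mat2_det X = b * c - l * (d - l) - d * (a - l)"
    by (simp add: X mat2_det_def algebra_simps)
  then show ?thesis by (simp only:) (intro dvd_diff dvd_mult dvd)
qed

lemma qf_poly_dvd_imp_cong_scalar:
  fixes M :: "'a::{comm_ring_1,algebraic_semidom} mat2"
  assumes "is_unit (mat2_det M)" "\<forall>i. g dvd coeff (qf_poly (qf_subst (Q1, Q0 - P1, - P0) M)) i"
  shows "mat2_cong_scalar g P1 (P1, P0, Q1, Q0)"
proof -
  obtain A B C where F: "qf_subst (Q1, Q0 - P1, - P0) M = (A, B, C)"
    by (cases "qf_subst (Q1, Q0 - P1, - P0) M")
  have "g dvd C" "g dvd B" "g dvd A"
    using assms(2)[rule_format, of 0] assms(2)[rule_format, of 1] assms(2)[rule_format, of 2]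
    by (simp_all add: F qf_poly_def numeral_2_eq_2)
  then have "qf_dvd g (qf_subst (Q1, Q0 - P1, - P0) M)" by (simp add: F qf_dvd_def)
  then have "qf_dvd g (Q1, Q0 - P1, - P0)" by (rule qf_dvd_subst_unimodular[OF assms(1)])
  then show ?thesis by (simp add: qf_dvd_def mat2_cong_scalar_def)
qed

text \<open>Conjugation by an invertible \<open>X\<close> preserves scalar matrices modulo \<open>g\<close>: the entries of
  \<open>det X \<cdot> (Y X - l I)\<close> are those of \<open>adj X \<cdot> (X Y - l I) \<cdot> X\<close>.\<close>

lemma mat2_cong_scalar_rotate:
  assumes "is_unit (mat2_det X)" "mat2_cong_scalar g l (mat2_mult X Y)"
  shows "mat2_cong_scalar g l (mat2_mult Y X)"
proof -
  obtain x1 x2 x3 x4 where X: "X = (x1, x2, x3, x4)" by (cases X)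
  obtain y1 y2 y3 y4 where Y: "Y = (y1, y2, y3, y4)" by (cases Y)
  define e where "e = x1 * x4 - x2 * x3"
  define E1 E2 E3 E4 where "E1 = x1 * y1 + x2 * y3 - l" and "E2 = x1 * y2 + x2 * y4"
    and "E3 = x3 * y1 + x4 * y3" and "E4 = x3 * y2 + x4 * y4 - l"
  have E: "g dvd E1" "g dvd E2" "g dvd E3" "g dvd E4"
    using assms(2)
    by (simp_all add: X Y mat2_mult_def mat2_cong_scalar_def E1_def E2_def E3_def E4_def)
  have "is_unit e" using assms(1) by (simp add: X mat2_det_def e_def)
  then have cancel: "g dvd z"
    if "e * z = (u1 * a1 - u2 * a2) * v1 + (u3 * a3 - u4 * a4) * v2"
      "g dvd a1" "g dvd a2" "g dvd a3" "g dvd a4"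
    for z u1 u2 u3 u4 v1 v2 a1 a2 a3 a4
  proof -
    have "g dvd (u1 * a1 - u2 * a2) * v1 + (u3 * a3 - u4 * a4) * v2"
      by (intro dvd_add dvd_mult2[OF dvd_diff[OF dvd_mult[OF that(2)] dvd_mult[OF that(3)]]]
          dvd_mult2[OF dvd_diff[OF dvd_mult[OF that(4)] dvd_mult[OF that(5)]]])
    then have "g dvd e * z" by (simp only: that(1))
    then show ?thesis by (simp add: dvd_mult_unit_iff'[OF \<open>is_unit e\<close>])
  qed
  have "e * (y1 * x1 + y2 * x3 - l) = (x4 * E1 - x2 * E3) * x1 + (x4 * E2 - x2 * E4) * x3"
    and "e * (y1 * x2 + y2 * x4) = (x4 * E1 - x2 * E3) * x2 + (x4 * E2 - x2 * E4) * x4"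
    and "e * (y3 * x1 + y4 * x3) = (x1 * E3 - x3 * E1) * x1 + (x1 * E4 - x3 * E2) * x3"
    and "e * (y3 * x2 + y4 * x4 - l) = (x1 * E3 - x3 * E1) * x2 + (x1 * E4 - x3 * E2) * x4"
    by (simp_all add: e_def E1_def E2_def E3_def E4_def algebra_simps)
  note cancel[OF this(1) E(1,3,2,4)] cancel[OF this(2) E(1,3,2,4)]
    cancel[OF this(3) E(3,1,4,2)] cancel[OF this(4) E(3,1,4,2)]
  then show ?thesis by (simp add: X Y mat2_mult_def mat2_cong_scalar_def)
qed

lemma dvd_cancel_square_unit:
  fixes g z l s :: "'a::comm_ring_1"
  assumes "g dvd z * l" "g dvd l * l - s" "s * s = 1"
  shows "g dvd z"
proof -
  have "g dvd z * l * l - z * (l * l - s)"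
    using dvd_mult2[OF assms(1)] dvd_mult[OF assms(2)] by (rule dvd_diff)
  then have "g dvd z * s * s" by (simp add: algebra_simps)
  then show ?thesis using assms(3) by (simp add: mult.assoc)
qed

lemma mat2_det_cf_matrix_square: "mat2_det (cf_matrix xs) * mat2_det (cf_matrix xs) = 1"
  by (simp add: mat2_det_cf_matrix flip: power_mult_distrib)

lemma is_unit_mat2_det_cf_matrix: "is_unit (mat2_det (cf_matrix xs))"
  using mat2_det_cf_matrix_square[of xs] by (intro dvdI[where k = "mat2_det (cf_matrix xs)"]) simp

lemma cf_matrix_cong_scalar_rotate:
  fixes xs ys :: "'a::{comm_ring_1,algebraic_semidom} list"
  assumes "mat2_cong_scalar g l (cf_matrix (xs @ ys))"
  shows "mat2_cong_scalar g l (cf_matrix (ys @ xs))"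
  using assms unfolding cf_matrix_append
  by (rule mat2_cong_scalar_rotate[OF is_unit_mat2_det_cf_matrix])

lemma cf_matrix_replicate:
  "1 \<le> m \<Longrightarrow> \<exists>u v w. cf_matrix (replicate m b) = (u, v, v, w) \<and> u = b * v + w"
proof (induction m)
  case (Suc m)
  show ?case
  proof (cases "m = 0")
    case False
    then obtain u v w where "cf_matrix (replicate m b) = (u, v, v, w)" "u = b * v + w"
      using Suc by auto
    then show ?thesis
      by (intro exI[of _ "b * u + v"] exI[of _ u] exI[of _ v]) (simp add: mat2_mult_def)
  qed (simp add: mat2_mult_def)
qed simp

lemma cf_matrix_replicate_pair:
  "1 \<le> m \<Longrightarrow>
    \<exists>s t r. cf_matrix (concat (replicate m [b, d])) = (s, b * t, d * t, r) \<and> s = b * d * t + r"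
proof (induction m)
  case (Suc m)
  show ?case
  proof (cases "m = 0")
    case False
    then obtain s t r where str: "cf_matrix (concat (replicate m [b, d])) = (s, b * t, d * t, r)"
      "s = b * d * t + r" using Suc by auto
    then show ?thesis
      by (intro exI[of _ "(b * d + 1) * s + b * d * t"] exI[of _ "s + t"] exI[of _ "d * b * t + r"])
        (simp add: mat2_mult_def algebra_simps)
  qed (intro exI[of _ "b * d + 1"] exI[of _ 1], simp add: mat2_mult_def)
qed simp

lemma cf_matrix_cong_scalar_single: "mat2_cong_scalar g l (cf_matrix [b]) \<Longrightarrow> is_unit g"
  by (simp add: mat2_mult_def mat2_cong_scalar_def)

lemma cf_matrix_cong_scalar_replicate_snoc:
  assumes "1 \<le> m" "mat2_cong_scalar g l (cf_matrix (replicate m b @ [d]))"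
  shows "g dvd b - d"
proof -
  obtain u v w where uvw: "cf_matrix (replicate m b) = (u, v, v, w)" "u = b * v + w"
    using cf_matrix_replicate[OF assms(1)] by blast
  then have "cf_matrix (replicate m b @ [d]) = (u * d + v, u, v * d + w, v)"
    by (simp add: cf_matrix_append mat2_mult_def)
  then have "g dvd u" "g dvd v * d + w" "g dvd v - l"
    using assms(2) by (auto simp: mat2_cong_scalar_def)
  moreover have "(b - d) * l = (b - d) * (l - v) + u - (v * d + w)"
    using uvw(2) by (simp add: algebra_simps)
  ultimately have "g dvd (b - d) * l"
    by (metis dvd_add dvd_diff dvd_mult dvd_minus_iff minus_diff_eq)
  then show ?thesis
    using mat2_cong_scalar_det[OF assms(2)] mat2_det_cf_matrix_square
    by (rule dvd_cancel_square_unit)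
qed

lemma cf_matrix_cong_scalar_replicate_pair_snoc:
  assumes "1 \<le> m" "mat2_cong_scalar g l (cf_matrix (concat (replicate m [b, d]) @ [c]))"
  shows "g dvd b - d"
proof -
  obtain s t r where str: "cf_matrix (concat (replicate m [b, d])) = (s, b * t, d * t, r)"
    using cf_matrix_replicate_pair[OF assms(1)] by blast
  then have "cf_matrix (concat (replicate m [b, d]) @ [c])
      = (s * c + b * t, s, d * t * c + r, d * t)"
    by (simp add: cf_matrix_append mat2_mult_def)
  then have "g dvd s * c + b * t - l" "g dvd s" "g dvd d * t - l"
    using assms(2) by (auto simp: mat2_cong_scalar_def)
  then have "g dvd b * t - l"
    by (metis add_diff_cancel_left' add_diff_eq dvd_diff dvd_mult2)
  moreover have "(b - d) * l = d * (b * t - l) - b * (d * t - l)"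
    by (simp add: algebra_simps)
  ultimately have "g dvd (b - d) * l"
    using \<open>g dvd d * t - l\<close> by (metis dvd_diff dvd_mult)
  then show ?thesis
    using mat2_cong_scalar_det[OF assms(2)] mat2_det_cf_matrix_square
    by (rule dvd_cancel_square_unit)
qed

lemma cf_matrix_cong_scalar_replicate_mid:
  fixes b c :: "'a::{comm_ring_1,algebraic_semidom}"
  assumes "1 \<le> m" "mat2_cong_scalar g l (cf_matrix (replicate m b @ [c] @ replicate k b))"
  shows "g dvd b - c"
proof -
  have "mat2_cong_scalar g l (cf_matrix (replicate (k + m) b @ [c]))"
    using cf_matrix_cong_scalar_rotate[of g l "replicate m b @ [c]" "replicate k b"] assms(2)
    by (simp add: replicate_add)
  then show ?thesis
    by (rule cf_matrix_cong_scalar_replicate_snoc[rotated]) (use assms(1) in simp)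
qed

lemma cf_matrix_cong_scalar_replicate_pair_mid:
  fixes b c d :: "'a::{comm_ring_1,algebraic_semidom}"
  assumes "1 \<le> m"
    "mat2_cong_scalar g l
      (cf_matrix (concat (replicate m [b, d]) @ [c] @ concat (replicate k [b, d])))"
  shows "g dvd b - d"
proof -
  have "mat2_cong_scalar g l (cf_matrix (concat (replicate (k + m) [b, d]) @ [c]))"
    using cf_matrix_cong_scalar_rotate[of g l "concat (replicate m [b, d]) @ [c]"
        "concat (replicate k [b, d])"] assms(2)
    by (simp add: replicate_add)
  then show ?thesis
    by (rule cf_matrix_cong_scalar_replicate_pair_snoc[rotated]) (use assms(1) in simp)
qed

section \<open>Eventually periodic continued fractions\<close>

definition cf_periodic :: "'a list \<Rightarrow> nat \<Rightarrow> 'a" where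
  "cf_periodic W i = W ! (i mod length W)"

lemma cf_word_tail: "(\<lambda>i. cf_word a n c W (Suc n + i)) = cf_periodic W"
  by (rule ext) (simp add: cf_word_def cf_periodic_def)

lemma cf_periodic_tail: "W \<noteq> [] \<Longrightarrow> (\<lambda>i. cf_periodic W (Suc (length W - 1) + i)) = cf_periodic W"
  by (rule ext) (simp add: cf_periodic_def)

lemma cf_matrix_eq_cf_periodic:
  assumes "W \<noteq> []"
  defines "B \<equiv> cf_periodic W" and "j \<equiv> length W - 1"
  shows "cf_matrix W = (cf_P B (Suc j), cf_P B j, cf_Q B (Suc j), cf_Q B j)"
proof -
  have "map B [0..<Suc j] = W"
    using assms(1) by (intro nth_equalityI) (simp_all add: B_def j_def cf_periodic_def)
  then show ?thesis using cf_matrix_upt[of B j] by simp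
qed

lemma cf_periodic_value:
  fixes W :: "'a::{field,finite} poly list"
  assumes "W \<noteq> []" "\<forall>w\<in>set W. 1 \<le> degree w" and M: "cf_matrix W = (P1, P0, Q1, Q0)"
  defines "\<gamma> \<equiv> cf_value (cf_periodic W)"
  shows "\<gamma> * (poly_to_fls Q1 * \<gamma> + poly_to_fls Q0) = poly_to_fls P1 * \<gamma> + poly_to_fls P0"
proof -
  have "cf_admissible (cf_periodic W)"
    using assms(1,2) by (simp add: cf_admissible_def cf_periodic_def)
  from cf_value_shift[OF this, of "length W - 1"] show ?thesis
    unfolding cf_periodic_tail[OF assms(1)] \<gamma>_def
    using M cf_matrix_eq_cf_periodic[OF assms(1)] by (simp del: cf_P.simps cf_Q.simps)
qed

lemma cf_matrix_period_degrees:
  fixes W :: "'a::idom poly list"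
  assumes "W \<noteq> []" "\<forall>w\<in>set W. 1 \<le> degree w" and M: "cf_matrix W = (P1, P0, Q1, Q0)"
  shows "P0 \<noteq> 0" and "degree P1 = degree P0 + degree (last W)"
    and "\<exists>R. P1 = last W * P0 + R \<and> (R = 0 \<or> degree R < degree P0)"
    and "Q0 = 0 \<or> degree Q0 < degree P0" and "degree Q1 < degree P1"
proof -
  define B j where "B = cf_periodic W" and "j = length W - 1"
  have B: "\<forall>i. 1 \<le> degree (B i)" using assms(1,2) by (simp add: B_def cf_periodic_def)
  have "B j = last W" using assms(1) by (simp add: B_def j_def cf_periodic_def last_conv_nth)
  have P: "P1 = cf_P B (Suc j)" "P0 = cf_P B j" "Q1 = cf_Q B (Suc j)" "Q0 = cf_Q B j"
    using M cf_matrix_eq_cf_periodic[OF assms(1)] by (simp_all add: B_def j_def)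
  show "P0 \<noteq> 0" and dP1: "degree P1 = degree P0 + degree (last W)"
    using cf_P_nonzero_degree[OF B, of j] cf_P_nonzero_degree[OF B, of "Suc j"] \<open>B j = last W\<close>
    by (simp_all add: P del: cf_P.simps)
  show "\<exists>R. P1 = last W * P0 + R \<and> (R = 0 \<or> degree R < degree P0)"
    using cf_P_Suc_decompose[OF B, of j] \<open>B j = last W\<close> P by metis
  show "Q0 = 0 \<or> degree Q0 < degree P0"
    unfolding P by (rule degree_cf_Q_less_cf_P[OF B])
  have "Q1 = 0 \<or> degree Q1 < degree P1"
    unfolding P by (rule degree_cf_Q_less_cf_P[OF B])
  moreover have "1 \<le> degree (last W)" using assms(1,2) by simp
  ultimately show "degree Q1 < degree P1" using dP1 by auto
qed

text \<open>The quadratic form vanishing at \<open>[A 0, A 1, \<dots>, A n, W, W, \<dots>]\<close>: the form of the purely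
  periodic tail, transformed by the adjugate of the matrix of the first \<open>n + 1\<close> partial quotients.\<close>

definition cf_quadratic :: "(nat \<Rightarrow> 'a::comm_ring_1) \<Rightarrow> nat \<Rightarrow> 'a list \<Rightarrow> 'a qform" where
  "cf_quadratic A n W = (case cf_matrix W of (P1, P0, Q1, Q0) \<Rightarrow>
     qf_subst (Q1, Q0 - P1, - P0) (- cf_Q A n, cf_P A n, cf_Q A (Suc n), - cf_P A (Suc n)))"

lemma cf_quadratic_content:
  fixes A :: "nat \<Rightarrow> 'a::{comm_ring_1,algebraic_semidom}"
  assumes "\<forall>i. g dvd coeff (qf_poly (cf_quadratic A n W)) i"
  shows "mat2_cong_scalar g (fst (cf_matrix W)) (cf_matrix W)"
proof -
  obtain P1 P0 Q1 Q0 where M: "cf_matrix W = (P1, P0, Q1, Q0)" by (cases "cf_matrix W")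
  have "mat2_det (- cf_Q A n, cf_P A n, cf_Q A (Suc n), - cf_P A (Suc n)) = (-1) ^ Suc n"
    using cf_det[of A n] by (simp add: mat2_det_def algebra_simps)
  then have "is_unit (mat2_det (- cf_Q A n, cf_P A n, cf_Q A (Suc n), - cf_P A (Suc n)))"
    by (intro dvdI[where k = "(-1) ^ Suc n"]) (simp flip: power_mult_distrib del: power_Suc)
  from qf_poly_dvd_imp_cong_scalar[OF this] show ?thesis
    using assms by (simp add: cf_quadratic_def M)
qed

lemma comparable_by_power:
  fixes H D Q :: real
  assumes "1 \<le> Q" "0 \<le> D" "H \<le> Q ^ k * D" "D \<le> Q ^ k * H" "k \<le> K"
  shows "\<bar>H\<bar> \<le> Q ^ K * \<bar>D\<bar> \<and> \<bar>D\<bar> \<le> Q ^ K * \<bar>H\<bar>"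
proof -
  have QK: "Q ^ k \<le> Q ^ K" using assms(5,1) by (rule power_increasing)
  have "0 < Q ^ k" using assms(1) by simp
  moreover have "0 \<le> Q ^ k * H" using assms(2,4) by linarith
  ultimately have "0 \<le> H" by (simp add: zero_le_mult_iff)
  have "H \<le> Q ^ K * D" using assms(3) mult_right_mono[OF QK assms(2)] by linarith
  moreover have "D \<le> Q ^ K * H" using assms(4) mult_right_mono[OF QK \<open>0 \<le> H\<close>] by linarith
  ultimately show ?thesis using assms(2) \<open>0 \<le> H\<close> by simp
qed

context
  fixes a :: "nat \<Rightarrow> 'a::{field,finite} poly" and n :: nat and c :: "'a poly" and W :: "'a poly list"
  assumes n: "1 \<le> n" and a: "\<forall>i. 1 \<le> i \<and> i \<le> n - 1 \<longrightarrow> 1 \<le> degree (a i)"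
    and c: "1 \<le> degree c" and W: "W \<noteq> []" "\<forall>w\<in>set W. 1 \<le> degree w"
begin

lemma cf_word_admissible: "cf_admissible (cf_word a n c W)"
  unfolding cf_admissible_def
proof (intro allI impI)
  fix i :: nat assume "1 \<le> i"
  then show "1 \<le> degree (cf_word a n c W i)"
    using n a c W by (auto simp: cf_word_def)
qed

lemma cf_quadratic_root:
  "poly_fls (qf_poly (cf_quadratic (cf_word a n c W) n W)) (cf_value (cf_word a n c W)) = 0"
proof -
  obtain P1 P0 Q1 Q0 where M: "cf_matrix W = (P1, P0, Q1, Q0)" by (cases "cf_matrix W")
  show ?thesis
    unfolding cf_quadratic_def M prod.case
    by (rule qf_subst_root[OF cf_value_shift[OF cf_word_admissible, of n, unfolded cf_word_tail]
          cf_periodic_value[OF W M]])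
qed

lemma degree_cf_den_period:
  "degree (cf_den (cf_word a n c W) (n + length W))
    = degree (cf_den (cf_word a n c W) n) + degree (fst (cf_matrix W))"
proof -
  define A B j where "A = cf_word a n c W" and "B = cf_periodic W" and "j = length W - 1"
  have adm: "cf_admissible A" unfolding A_def by (rule cf_word_admissible)
  have B: "\<forall>i. 1 \<le> degree (B i)" using W by (simp add: B_def cf_periodic_def)
  have "cf_den A (n + length W) = cf_Q A (Suc n + Suc j)"
    using W(1) by (simp add: cf_den_def j_def del: cf_Q.simps)
  also have "\<dots> = cf_Q A (Suc n) * cf_P B (Suc j) + cf_Q A n * cf_Q B (Suc j)"
    using cf_shift(2)[of A n j, unfolded A_def cf_word_tail] by (simp only: A_def B_def)
  also have "degree \<dots> = degree (cf_Q A (Suc n) * cf_P B (Suc j))"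
  proof (rule degree_add_dominated)
    have "cf_Q A (Suc n) \<noteq> 0" "cf_P B (Suc j) \<noteq> 0"
      using cf_Q_nonzero_degree[OF adm] cf_P_nonzero_degree[OF B] by blast+
    moreover have "cf_Q A n = 0 \<or> degree (cf_Q A n) < degree (cf_Q A (Suc n))"
      by (rule degree_cf_Q_less_Suc[OF adm])
    moreover have "cf_Q B (Suc j) = 0 \<or> degree (cf_Q B (Suc j)) < degree (cf_P B (Suc j))"
      by (rule degree_cf_Q_less_cf_P[OF B])
    ultimately show "cf_Q A n * cf_Q B (Suc j) = 0
        \<or> degree (cf_Q A n * cf_Q B (Suc j)) < degree (cf_Q A (Suc n) * cf_P B (Suc j))"
      using degree_mult_le[of "cf_Q A n" "cf_Q B (Suc j)"] by (auto simp: degree_mult_eq)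
  qed
  finally show ?thesis
    using cf_Q_nonzero_degree[OF adm, of n] cf_P_nonzero_degree[OF B, of "Suc j"]
      cf_matrix_eq_cf_periodic[OF W(1)]
    by (simp add: degree_mult_eq cf_den_def A_def B_def j_def del: cf_P.simps cf_Q.simps)
qed

lemma cf_word_cf_Q_step:
  defines "A \<equiv> cf_word a n c W"
  shows "cf_Q A (Suc n) = c * cf_Q A n + cf_Q A (n - 1)"
    and "cf_Q A n \<noteq> 0" and "cf_Q A (n - 1) = 0 \<or> degree (cf_Q A (n - 1)) < degree (cf_Q A n)"
    and "degree (cf_Q A (Suc n)) = degree c + degree (cf_Q A n)"
    and "degree (cf_P A (Suc n)) \<le> degree (cf_Q A (Suc n))" "degree (cf_P A n) \<le> degree (cf_Q A n)"
proof -
  obtain m where m: "n = Suc m" using n by (cases n) auto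
  have adm: "cf_admissible A" unfolding A_def by (rule cf_word_admissible)
  have "A 0 = 0" "A n = c" using n by (simp_all add: A_def cf_word_def)
  then show "cf_Q A (Suc n) = c * cf_Q A n + cf_Q A (n - 1)" by (simp add: m)
  show "cf_Q A n \<noteq> 0" using cf_Q_nonzero_degree[OF adm, of m] by (simp add: m)
  show "cf_Q A (n - 1) = 0 \<or> degree (cf_Q A (n - 1)) < degree (cf_Q A n)"
    using degree_cf_Q_less_Suc[OF adm, of m] by (simp add: m)
  show "degree (cf_Q A (Suc n)) = degree c + degree (cf_Q A n)"
    using cf_Q_nonzero_degree[OF adm, of n] cf_Q_nonzero_degree[OF adm, of m] \<open>A n = c\<close>
    by (simp add: m del: cf_Q.simps)
  show "degree (cf_P A (Suc n)) \<le> degree (cf_Q A (Suc n))" "degree (cf_P A n) \<le> degree (cf_Q A n)"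
    using degree_cf_P_le_cf_Q[OF adm \<open>A 0 = 0\<close>, of n] degree_cf_P_le_cf_Q[OF adm \<open>A 0 = 0\<close>, of m]
    by (simp_all add: m del: cf_P.simps cf_Q.simps)
qed

lemma cf_quadratic_degrees:
  assumes "last W \<noteq> c"
  defines "G \<equiv> cf_quadratic (cf_word a n c W) n W"
    and "N \<equiv> degree (cf_den (cf_word a n c W) n * cf_den (cf_word a n c W) (n + length W))"
  shows "degree (coeff (qf_poly G) i) \<le> N"
    and "N \<le> degree (fst G) + degree c + degree (last W)"
    and "0 < degree (fst G)"
proof -
  define A where "A = cf_word a n c W"
  have adm: "cf_admissible A" unfolding A_def by (rule cf_word_admissible)
  define q q' q'' p p' where "q = cf_Q A (Suc n)" and "q' = cf_Q A n" and "q'' = cf_Q A (n - 1)"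
    and "p = cf_P A (Suc n)" and "p' = cf_P A n"
  obtain P1 P0 Q1 Q0 where M: "cf_matrix W = (P1, P0, Q1, Q0)" by (cases "cf_matrix W")
  note P = cf_matrix_period_degrees[OF W M]
  obtain Rr where Rr: "P1 = last W * P0 + Rr" "Rr = 0 \<or> degree Rr < degree P0" using P(3) by blast
  note q = cf_word_cf_Q_step[folded A_def q_def q'_def q''_def p_def p'_def]
  have G: "G = qf_subst (Q1, Q0 - P1, - P0) (- q', p', q, - p)"
    by (simp add: G_def cf_quadratic_def M A_def q_def q'_def p_def p'_def)
  have "c \<noteq> 0" using c by auto
  have lead: "degree (fst G) = degree (last W - c) + degree P0 + degree q' + degree q"
    unfolding G using degree_qf_subst_leading[OF q(1,2) \<open>c \<noteq> 0\<close> q(3) Rr(1) P(1) Rr(2) assms(1)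
        P(4)] P(2,5) by simp
  have "cf_den A n \<noteq> 0" "cf_den A (n + length W) \<noteq> 0"
    using cf_Q_nonzero_degree[OF adm] by (simp_all add: cf_den_def del: cf_Q.simps)
  then have N: "N = 2 * degree q + degree P1"
    using degree_cf_den_period M by (simp add: N_def A_def q_def cf_den_def degree_mult_eq)
  show "degree (coeff (qf_poly G) i) \<le> N"
    unfolding G N
  proof (rule degree_qf_subst_le)
    show "degree Q1 \<le> degree P1" "degree (Q0 - P1) \<le> degree P1" "degree (- P0) \<le> degree P1"
      using P by (auto intro: degree_diff_le)
    show "degree (- q') \<le> degree q" "degree p' \<le> degree q" "degree q \<le> degree q"
      "degree (- p) \<le> degree q"
      using q(4-6) by simp_all
  qed
  show "N \<le> degree (fst G) + degree c + degree (last W)"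
    using N lead q(4) P(2) by simp
  show "0 < degree (fst G)" using lead q(4) c by simp
qed

lemma cf_word_height_bounds:
  assumes "last W \<noteq> c" and "e \<noteq> 0"
    and e: "\<forall>g l. mat2_cong_scalar g l (cf_matrix W) \<longrightarrow> g dvd e"
  defines "D \<equiv> fabs (poly_to_fls
    (cf_den (cf_word a n c W) n * cf_den (cf_word a n c W) (n + length W)))"
  shows "height (cf_value (cf_word a n c W)) \<le> D"
    and "D \<le> real CARD('a) ^ (degree c + degree (last W) + degree e)
      * height (cf_value (cf_word a n c W))"
proof -
  define A where "A = cf_word a n c W"
  define Q G N where "Q = real CARD('a)" and "G = cf_quadratic A n W"
    and "N = degree (cf_den A n * cf_den A (n + length W))"
  have "1 \<le> Q" using card_field_ge_2[where 'a = 'a] by (simp add: Q_def)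
  have adm: "cf_admissible A" unfolding A_def by (rule cf_word_admissible)
  have "0 < degree (fst G)" using cf_quadratic_degrees(3)[OF assms(1)] by (simp add: G_def A_def)
  then have "fst G \<noteq> 0" by auto
  moreover obtain A2 B2 C2 where "G = (A2, B2, C2)" by (cases G)
  ultimately have deg2: "degree (qf_poly G) = 2" and lead: "lead_coeff (qf_poly G) = fst G"
    by (simp_all add: degree_qf_poly coeff_qf_poly_2)
  have "\<forall>i. degree (coeff (qf_poly G) i) \<le> N"
    using cf_quadratic_degrees(1)[OF assms(1)] by (simp add: G_def N_def A_def)
  then obtain g where g: "\<forall>i. g dvd coeff (qf_poly G) i"
    and upper: "height (cf_value A) \<le> Q ^ N"
    and lower: "Q ^ (degree (fst G) - degree g) \<le> height (cf_value A)"
    using height_quadratic_bounds[OF cf_value_irrational[OF adm] deg2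
        cf_quadratic_root[folded A_def G_def]]
    by (auto simp: Q_def lead)
  have "g dvd e" using e cf_quadratic_content[OF g[unfolded G_def]] by blast
  then have "degree g \<le> degree e" using \<open>e \<noteq> 0\<close> by (rule dvd_imp_degree_le)
  have "g dvd fst G" using g[rule_format, of 2] by (simp add: lead[symmetric] deg2)
  then have "degree g \<le> degree (fst G)" using \<open>fst G \<noteq> 0\<close> by (rule dvd_imp_degree_le)
  have "cf_den A n * cf_den A (n + length W) \<noteq> 0"
    using cf_Q_nonzero_degree[OF adm] by (simp add: cf_den_def del: cf_Q.simps)
  then have D: "D = Q ^ N" by (simp add: D_def N_def Q_def A_def fabs_poly_to_fls)
  then show "height (cf_value (cf_word a n c W)) \<le> D" using upper by (simp add: A_def)
  have "N \<le> (degree c + degree (last W) + degree e) + (degree (fst G) - degree g)"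
    using cf_quadratic_degrees(2)[OF assms(1)] \<open>degree g \<le> degree e\<close> \<open>degree g \<le> degree (fst G)\<close>
    by (simp add: N_def G_def A_def)
  then have "Q ^ N \<le> Q ^ (degree c + degree (last W) + degree e) * Q ^ (degree (fst G) - degree g)"
    using \<open>1 \<le> Q\<close> by (simp flip: power_add add: power_increasing)
  also have "\<dots> \<le> Q ^ (degree c + degree (last W) + degree e) * height (cf_value A)"
    using lower \<open>1 \<le> Q\<close> by (intro mult_left_mono) auto
  finally show "D \<le> real CARD('a) ^ (degree c + degree (last W) + degree e)
      * height (cf_value (cf_word a n c W))"
    by (simp add: D Q_def A_def)
qed

lemma cf_word_height_comparable:
  assumes "last W \<noteq> c" "e \<noteq> 0" "\<forall>g l. mat2_cong_scalar g l (cf_matrix W) \<longrightarrow> g dvd e"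
    and K: "degree c + degree (last W) + degree e \<le> K"
  defines "H \<equiv> height (cf_value (cf_word a n c W))"
    and "D \<equiv> fabs (poly_to_fls
      (cf_den (cf_word a n c W) n * cf_den (cf_word a n c W) (n + length W)))"
  shows "\<bar>H\<bar> \<le> real CARD('a) ^ K * \<bar>D\<bar> \<and> \<bar>D\<bar> \<le> real CARD('a) ^ K * \<bar>H\<bar>"
proof (rule comparable_by_power)
  define Q k where "Q = real CARD('a)" and "k = degree c + degree (last W) + degree e"
  show "1 \<le> Q" using card_field_ge_2[where 'a = 'a] by (simp add: Q_def)
  show "0 \<le> D" by (simp add: D_def fabs_nonneg)
  have "H \<le> D" "D \<le> Q ^ k * H"
    using cf_word_height_bounds[OF assms(1-3)] by (simp_all add: H_def D_def Q_def k_def)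
  moreover have "D \<le> Q ^ k * D"
    using mult_right_mono[OF one_le_power[OF \<open>1 \<le> Q\<close>] \<open>0 \<le> D\<close>] by simp
  ultimately show "H \<le> Q ^ k * D" "D \<le> Q ^ k * H" by simp_all
  show "k \<le> K" using K by (simp add: k_def)
qed

end

lemma height_cf_single:
  fixes b c :: "'a::{field,finite} poly"
  assumes "b \<noteq> c" "degree b \<ge> 1" "degree c \<ge> 1"
  shows "\<exists>C>0. \<forall>(n::nat) (a::nat \<Rightarrow> 'a poly).
      n \<ge> 1 \<and> (\<forall>i. 1 \<le> i \<and> i \<le> n - 1 \<longrightarrow> degree (a i) \<ge> 1) \<longrightarrow>
      (let A = cf_word a n c [b];
           H = height (cf_value A); B = fabs (poly_to_fls (cf_den A n)) ^ 2
       in \<bar>H\<bar> \<le> C * \<bar>B\<bar> \<and> \<bar>B\<bar> \<le> C * \<bar>H\<bar>)"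
proof (intro exI[of _ "real CARD('a) ^ (2 * degree b + degree c)"] conjI allI impI)
  define Q where "Q = real CARD('a)"
  have "1 \<le> Q" using card_field_ge_2[where 'a = 'a] by (simp add: Q_def)
  then show "0 < real CARD('a) ^ (2 * degree b + degree c)" by (simp add: Q_def)
  fix n :: nat and a :: "nat \<Rightarrow> 'a poly"
  assume h: "n \<ge> 1 \<and> (\<forall>i. 1 \<le> i \<and> i \<le> n - 1 \<longrightarrow> degree (a i) \<ge> 1)"
  define A where "A = cf_word a n c [b]"
  define H D D' where "H = height (cf_value A)"
    and "D = fabs (poly_to_fls (cf_den A n * cf_den A (n + 1)))"
    and "D' = fabs (poly_to_fls (cf_den A n)) ^ 2"
  have cong: "\<forall>g l. mat2_cong_scalar g l (cf_matrix [b]) \<longrightarrow> g dvd 1"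
    using cf_matrix_cong_scalar_single by blast
  have "H \<le> D" "D \<le> Q ^ (degree c + degree b) * H"
    using cf_word_height_bounds[of n a c "[b]" 1, OF _ _ _ _ _ _ _ cong] h assms
    by (simp_all add: H_def D_def Q_def A_def)
  have adm: "cf_admissible A"
    unfolding A_def by (rule cf_word_admissible) (use h assms in auto)
  have "cf_den A n \<noteq> 0" "cf_den A (n + 1) \<noteq> 0"
    using cf_Q_nonzero_degree[OF adm] by (simp_all add: cf_den_def del: cf_Q.simps)
  moreover have "degree (cf_den A (n + 1)) = degree (cf_den A n) + degree b"
    using degree_cf_den_period[of n a c "[b]"] h assms by (simp add: A_def mat2_mult_def)
  ultimately have "D = Q ^ degree b * D'"
    by (simp add: D_def D'_def fabs_poly_to_fls degree_mult_eq Q_def power_add power2_eq_square)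
  have "0 \<le> D'" by (simp add: D'_def)
  show "let A = cf_word a n c [b]; H = height (cf_value A); B = fabs (poly_to_fls (cf_den A n)) ^ 2
    in \<bar>H\<bar> \<le> real CARD('a) ^ (2 * degree b + degree c) * \<bar>B\<bar>
      \<and> \<bar>B\<bar> \<le> real CARD('a) ^ (2 * degree b + degree c) * \<bar>H\<bar>"
    unfolding Let_def A_def[symmetric] H_def[symmetric] D'_def[symmetric] Q_def[symmetric]
  proof (rule comparable_by_power[OF \<open>1 \<le> Q\<close> \<open>0 \<le> D'\<close>])
    have "Q ^ degree b \<le> Q ^ (degree c + degree b)"
      using \<open>1 \<le> Q\<close> by (simp add: power_increasing)
    then show "H \<le> Q ^ (degree c + degree b) * D'"
      using \<open>H \<le> D\<close> \<open>D = Q ^ degree b * D'\<close> mult_right_mono[OF _ \<open>0 \<le> D'\<close>] by fastforce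
    have "D' \<le> D"
      using \<open>D = Q ^ degree b * D'\<close> mult_right_mono[OF one_le_power[OF \<open>1 \<le> Q\<close>] \<open>0 \<le> D'\<close>]
      by simp
    then show "D' \<le> Q ^ (degree c + degree b) * H" using \<open>D \<le> _\<close> by simp
  qed simp
qed

lemma height_cf_replicate_snoc:
  fixes b c d :: "'a::{field,finite} poly"
  assumes "b \<noteq> d" "c \<noteq> d" "degree b \<ge> 1" "degree c \<ge> 1" "degree d \<ge> 1"
  shows "\<exists>C>0. \<forall>(n::nat) (m::nat) (a::nat \<Rightarrow> 'a poly).
      n \<ge> 1 \<and> m \<ge> 1 \<and> (\<forall>i. 1 \<le> i \<and> i \<le> n - 1 \<longrightarrow> degree (a i) \<ge> 1) \<longrightarrow>
      (let A = cf_word a n c (replicate m b @ [d]);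
           H = height (cf_value A);
           B = fabs (poly_to_fls (cf_den A n * cf_den A (n + m + 1)))
       in \<bar>H\<bar> \<le> C * \<bar>B\<bar> \<and> \<bar>B\<bar> \<le> C * \<bar>H\<bar>)"
proof (intro exI[of _ "real CARD('a) ^ (degree b + degree c + 2 * degree d)"] conjI allI impI)
  show "0 < real CARD('a) ^ (degree b + degree c + 2 * degree d)"
    using card_field_ge_2[where 'a = 'a] by simp
  fix n m :: nat and a :: "nat \<Rightarrow> 'a poly"
  assume h: "n \<ge> 1 \<and> m \<ge> 1 \<and> (\<forall>i. 1 \<le> i \<and> i \<le> n - 1 \<longrightarrow> degree (a i) \<ge> 1)"
  let ?W = "replicate m b @ [d]"
  have cong: "\<forall>g l. mat2_cong_scalar g l (cf_matrix ?W) \<longrightarrow> g dvd b - d"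
    using h cf_matrix_cong_scalar_replicate_snoc by blast
  have "degree c + degree (last ?W) + degree (b - d) \<le> degree b + degree c + 2 * degree d"
    using degree_diff_le_max[of b d] by simp
  from cf_word_height_comparable[of n a c ?W, OF _ _ _ _ _ _ _ cong this] h assms
  show "let A = cf_word a n c ?W; H = height (cf_value A);
      B = fabs (poly_to_fls (cf_den A n * cf_den A (n + m + 1)))
    in \<bar>H\<bar> \<le> real CARD('a) ^ (degree b + degree c + 2 * degree d) * \<bar>B\<bar>
      \<and> \<bar>B\<bar> \<le> real CARD('a) ^ (degree b + degree c + 2 * degree d) * \<bar>H\<bar>"
    by (simp add: Let_def)
qed

lemma height_cf_replicate_mid:
  fixes b c :: "'a::{field,finite} poly"
  assumes "b \<noteq> c" "degree b \<ge> 1" "degree c \<ge> 1"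
  shows "\<exists>C>0. \<forall>(n::nat) (m::nat) (l::nat) (a::nat \<Rightarrow> 'a poly).
      n \<ge> 1 \<and> m \<ge> 1 \<and> l \<ge> 1 \<and> (\<forall>i. 1 \<le> i \<and> i \<le> n - 1 \<longrightarrow> degree (a i) \<ge> 1) \<longrightarrow>
      (let A = cf_word a n c (replicate m b @ [c] @ replicate l b);
           H = height (cf_value A);
           B = fabs (poly_to_fls (cf_den A n * cf_den A (n + m + l + 1)))
       in \<bar>H\<bar> \<le> C * \<bar>B\<bar> \<and> \<bar>B\<bar> \<le> C * \<bar>H\<bar>)"
proof (intro exI[of _ "real CARD('a) ^ (2 * degree b + 2 * degree c)"] conjI allI impI)
  show "0 < real CARD('a) ^ (2 * degree b + 2 * degree c)"
    using card_field_ge_2[where 'a = 'a] by simp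
  fix n m l :: nat and a :: "nat \<Rightarrow> 'a poly"
  assume h: "n \<ge> 1 \<and> m \<ge> 1 \<and> l \<ge> 1 \<and> (\<forall>i. 1 \<le> i \<and> i \<le> n - 1 \<longrightarrow> degree (a i) \<ge> 1)"
  let ?W = "replicate m b @ [c] @ replicate l b"
  have cong: "\<forall>g k. mat2_cong_scalar g k (cf_matrix ?W) \<longrightarrow> g dvd b - c"
    using h cf_matrix_cong_scalar_replicate_mid by blast
  have "last ?W = b" using h by simp
  moreover have "degree c + degree b + degree (b - c) \<le> 2 * degree b + 2 * degree c"
    using degree_diff_le_max[of b c] by simp
  ultimately have "degree c + degree (last ?W) + degree (b - c) \<le> 2 * degree b + 2 * degree c"
    by simp
  from cf_word_height_comparable[of n a c ?W, OF _ _ _ _ _ _ _ cong this] h assms \<open>last ?W = b\<close>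
  show "let A = cf_word a n c ?W; H = height (cf_value A);
      B = fabs (poly_to_fls (cf_den A n * cf_den A (n + m + l + 1)))
    in \<bar>H\<bar> \<le> real CARD('a) ^ (2 * degree b + 2 * degree c) * \<bar>B\<bar>
      \<and> \<bar>B\<bar> \<le> real CARD('a) ^ (2 * degree b + 2 * degree c) * \<bar>H\<bar>"
    by (simp add: Let_def add.assoc)
qed

lemma height_cf_replicate_pair_mid:
  fixes b c d :: "'a::{field,finite} poly"
  assumes "b \<noteq> d" "c \<noteq> d" "degree b \<ge> 1" "degree c \<ge> 1" "degree d \<ge> 1"
  shows "\<exists>C>0. \<forall>(n::nat) (m::nat) (l::nat) (a::nat \<Rightarrow> 'a poly).
      n \<ge> 1 \<and> m \<ge> 1 \<and> l \<ge> 1 \<and> (\<forall>i. 1 \<le> i \<and> i \<le> n - 1 \<longrightarrow> degree (a i) \<ge> 1) \<longrightarrow>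
      (let A = cf_word a n c (concat (replicate m [b, d]) @ [c] @ concat (replicate l [b, d]));
           H = height (cf_value A);
           B = fabs (poly_to_fls (cf_den A n * cf_den A (n + 2 * m + 2 * l + 1)))
       in \<bar>H\<bar> \<le> C * \<bar>B\<bar> \<and> \<bar>B\<bar> \<le> C * \<bar>H\<bar>)"
proof (intro exI[of _ "real CARD('a) ^ (degree b + degree c + 2 * degree d)"] conjI allI impI)
  show "0 < real CARD('a) ^ (degree b + degree c + 2 * degree d)"
    using card_field_ge_2[where 'a = 'a] by simp
  fix n m l :: nat and a :: "nat \<Rightarrow> 'a poly"
  assume h: "n \<ge> 1 \<and> m \<ge> 1 \<and> l \<ge> 1 \<and> (\<forall>i. 1 \<le> i \<and> i \<le> n - 1 \<longrightarrow> degree (a i) \<ge> 1)"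
  let ?W = "concat (replicate m [b, d]) @ [c] @ concat (replicate l [b, d])"
  have cong: "\<forall>g k. mat2_cong_scalar g k (cf_matrix ?W) \<longrightarrow> g dvd b - d"
    using h cf_matrix_cong_scalar_replicate_pair_mid by blast
  obtain l' where "l = Suc l'" using h by (cases l) auto
  then have "last ?W = d" by (simp add: replicate_append_same[symmetric])
  moreover have "degree c + degree d + degree (b - d) \<le> degree b + degree c + 2 * degree d"
    using degree_diff_le_max[of b d] by simp
  ultimately have
    "degree c + degree (last ?W) + degree (b - d) \<le> degree b + degree c + 2 * degree d"
    by simp
  moreover have "\<forall>w\<in>set ?W. 1 \<le> degree w" and "length ?W = 2 * m + 2 * l + 1"
    using assms by (auto simp: length_concat sum_list_replicate)
  ultimately show "let A = cf_word a n c ?W; H = height (cf_value A);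
      B = fabs (poly_to_fls (cf_den A n * cf_den A (n + 2 * m + 2 * l + 1)))
    in \<bar>H\<bar> \<le> real CARD('a) ^ (degree b + degree c + 2 * degree d) * \<bar>B\<bar>
      \<and> \<bar>B\<bar> \<le> real CARD('a) ^ (degree b + degree c + 2 * degree d) * \<bar>H\<bar>"
    using cf_word_height_comparable[of n a c ?W, OF _ _ _ _ _ _ _ cong] h assms \<open>last ?W = d\<close>
    by (simp add: Let_def add.assoc)
qed

theorem lemma4p6:
  fixes b c d :: "'a::{field,finite} poly"
  assumes "b \<noteq> c" "b \<noteq> d" "c \<noteq> d"
    and "degree b \<ge> 1" "degree c \<ge> 1" "degree d \<ge> 1"
  shows
   "(\<exists>C>0. \<forall>(n::nat) (a::nat \<Rightarrow> 'a poly).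
      n \<ge> 1 \<and> (\<forall>i. 1 \<le> i \<and> i \<le> n - 1 \<longrightarrow> degree (a i) \<ge> 1) \<longrightarrow>
      (let A = cf_word a n c [b];
           H = height (cf_value A); B = fabs (poly_to_fls (cf_den A n)) ^ 2
       in \<bar>H\<bar> \<le> C * \<bar>B\<bar> \<and> \<bar>B\<bar> \<le> C * \<bar>H\<bar>))
  \<and> (\<exists>C>0. \<forall>(n::nat) (m::nat) (a::nat \<Rightarrow> 'a poly).
      n \<ge> 1 \<and> m \<ge> 1 \<and> (\<forall>i. 1 \<le> i \<and> i \<le> n - 1 \<longrightarrow> degree (a i) \<ge> 1) \<longrightarrow>
      (let A = cf_word a n c (replicate m b @ [d]);
           H = height (cf_value A);
           B = fabs (poly_to_fls (cf_den A n * cf_den A (n + m + 1)))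
       in \<bar>H\<bar> \<le> C * \<bar>B\<bar> \<and> \<bar>B\<bar> \<le> C * \<bar>H\<bar>))
  \<and> (\<exists>C>0. \<forall>(n::nat) (m::nat) (l::nat) (a::nat \<Rightarrow> 'a poly).
      n \<ge> 1 \<and> m \<ge> 1 \<and> l \<ge> 1 \<and> (\<forall>i. 1 \<le> i \<and> i \<le> n - 1 \<longrightarrow> degree (a i) \<ge> 1) \<longrightarrow>
      (let A = cf_word a n c (replicate m b @ [c] @ replicate l b);
           H = height (cf_value A);
           B = fabs (poly_to_fls (cf_den A n * cf_den A (n + m + l + 1)))
       in \<bar>H\<bar> \<le> C * \<bar>B\<bar> \<and> \<bar>B\<bar> \<le> C * \<bar>H\<bar>))
  \<and> (\<exists>C>0. \<forall>(n::nat) (m::nat) (l::nat) (a::nat \<Rightarrow> 'a poly).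
      n \<ge> 1 \<and> m \<ge> 1 \<and> l \<ge> 1 \<and> (\<forall>i. 1 \<le> i \<and> i \<le> n - 1 \<longrightarrow> degree (a i) \<ge> 1) \<longrightarrow>
      (let A = cf_word a n c (concat (replicate m [b, d]) @ [c] @ concat (replicate l [b, d]));
           H = height (cf_value A);
           B = fabs (poly_to_fls (cf_den A n * cf_den A (n + 2 * m + 2 * l + 1)))
       in \<bar>H\<bar> \<le> C * \<bar>B\<bar> \<and> \<bar>B\<bar> \<le> C * \<bar>H\<bar>))"
  using height_cf_single[OF assms(1,4,5)] height_cf_replicate_snoc[OF assms(2,3,4,5,6)]
    height_cf_replicate_mid[OF assms(1,4,5)] height_cf_replicate_pair_mid[OF assms(2,3,4,5,6)]
  by blast

end
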